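(* Consider the impulsive seasonally forced system $$\dot S=S(A-S)-\beta_\gamma(t)IS,\qquad \dot I=\beta_\gamma(t)IS-(\sigma+g)I,\qquad t\neq nT,$$ $$S(nT)=(1-p)S(nT^-),\qquad I(nT)=I(nT^-),\quad n\in\mathbb{N},$$ with $\beta_\gamma(t)=\beta_0(1+\gamma\Psi(\omega t))$. For $\gamma,\omega>0$ small and $A>S_c$, the $T$-periodic solution $(\mathcal{S},0)$ is asymptotically stable if and only if $p_2^{\rm seas}(T)<p<p_1(T)$, where $$p_1(T)=1-e^{-AT},\qquad p_2^{\rm seas}(T)=1-\exp\left\{-\left[(A-S_c)T+\gamma\int_0^T\Psi(\omega t)\mathcal{S}(t)\,dt\right]\right\}.$$
   Context: Parameters: $A\in(0,1]$, $\beta_0>0$, $\sigma,g\ge0$ with $\sigma+g>0$, $p\in[0,1]$, $T>0$; $S_c=(\sigma+g)/\beta_0$; it is assumed $S(t)\le A$ for all $t$. $\Psi:\mathbb{R}\to\mathbb{R}^+$ is $\tau$-periodic (for some $\tau>0$) with at least two nondegenerate critical points and $\frac1\tau\int_0^\tau\beta_\gamma>0$. $\mathcal{S}$ is the $T$-periodic function given for $nT\le t<(n+1)T$ by $\mathcal{S}(t)=\frac{A[e^{AT}(1-p)-1]}{e^{AT}(1-p)-1+pe^{A(T-(t-nT))}}$, and $(\mathcal{S},0)$ is a solution of the system. A $T$-periodic solution through $x_0$ is asymptotically stable if for every neighbourhood $V$ of $x_0$ there is a neighbourhood $W\subset V$ with $\varphi(kT,y_0)\in V$ for all $y_0\in W$,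 $k\in\mathbb{N}$, and there is a neighbourhood $V$ with $\varphi(kT,y_0)\to x_0$ as $k\to\infty$ for all $y_0\in V$. *)

theory Defs
  imports "HOL-Analysis.Analysis"
begin

definition beta_seas :: "real \<Rightarrow> real \<Rightarrow> real \<Rightarrow> (real \<Rightarrow> real) \<Rightarrow> real \<Rightarrow> real" where
  "beta_seas \<beta>0 \<gamma> \<omega> \<Psi> t = \<beta>0 * (1 + \<gamma> * \<Psi> (\<omega> * t))"

definition si_field :: "(real \<Rightarrow> real) \<Rightarrow> real \<Rightarrow> real \<Rightarrow> real \<Rightarrow> real \<Rightarrow> real \<times> real \<Rightarrow> real \<times> real" where
  "si_field b A \<sigma> g t z =
     (fst z * (A - fst z) - b t * snd z * fst z,
      b t * snd z * fst z - (\<sigma> + g) * snd z)"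

definition si_jump :: "real \<Rightarrow> real \<times> real \<Rightarrow> real \<times> real" where
  "si_jump p z = ((1 - p) * fst z, snd z)"

definition impulsive_solution ::
  "(real \<Rightarrow> real \<times> real \<Rightarrow> real \<times> real) \<Rightarrow> (real \<times> real \<Rightarrow> real \<times> real) \<Rightarrow> real
     \<Rightarrow> (real \<Rightarrow> real \<times> real) \<Rightarrow> bool" where
  "impulsive_solution F J T x \<longleftrightarrow>
     (\<forall>n::nat.
        continuous_on {real n * T ..< real (Suc n) * T} x \<and>
        (\<forall>t \<in> {real n * T <..< real (Suc n) * T}. (x has_vector_derivative F t (x t)) (at t)) \<and>
        (\<exists>L. (x \<longlongrightarrow> L) (at_left (real (Suc n) * T)) \<and> x (real (Suc n) * T) = J L))"

text \<open>Asymptotic stability of the T-periodic solution through x0, in terms of the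
  stroboscopic values phi(kT, y0) of the (unique) solution starting at y0 at time 0.\<close>
definition asymp_stable_periodic ::
  "(real \<Rightarrow> real \<times> real \<Rightarrow> real \<times> real) \<Rightarrow> (real \<times> real \<Rightarrow> real \<times> real) \<Rightarrow> real
     \<Rightarrow> real \<times> real \<Rightarrow> bool" where
  "asymp_stable_periodic F J T x0 \<longleftrightarrow>
     (\<forall>V. open V \<and> x0 \<in> V \<longrightarrow>
        (\<exists>W. open W \<and> x0 \<in> W \<and> W \<subseteq> V \<and>
           (\<forall>y0 \<in> W. (\<exists>x. impulsive_solution F J T x \<and> x 0 = y0) \<and>
              (\<forall>x. impulsive_solution F J T x \<and> x 0 = y0 \<longrightarrow> (\<forall>k::nat. x (real k * T) \<in> V))))) \<and>
     (\<exists>V. open V \<and> x0 \<in> V \<and>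
        (\<forall>y0 \<in> V. (\<exists>x. impulsive_solution F J T x \<and> x 0 = y0) \<and>
           (\<forall>x. impulsive_solution F J T x \<and> x 0 = y0 \<longrightarrow>
               (\<lambda>k::nat. x (real k * T)) \<longlonglongrightarrow> x0)))"

definition Sper :: "real \<Rightarrow> real \<Rightarrow> real \<Rightarrow> real \<Rightarrow> real" where
  "Sper A p T t =
     (let s = t - T * of_int \<lfloor>t / T\<rfloor> in
       A * (exp (A * T) * (1 - p) - 1) / (exp (A * T) * (1 - p) - 1 + p * exp (A * (T - s))))"

definition p1 :: "real \<Rightarrow> real \<Rightarrow> real" where
  "p1 A T = 1 - exp (- (A * T))"

definition p2_seas :: "real \<Rightarrow> real \<Rightarrow> real \<Rightarrow> real \<Rightarrow> real \<Rightarrow> real \<Rightarrow> (real \<Rightarrow> real) \<Rightarrow> real \<Rightarrow> real" where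
  "p2_seas A Sc p \<gamma> \<omega> T \<Psi> T' =
     1 - exp (- ((A - Sc) * T' + \<gamma> * integral {0..T'} (\<lambda>t. \<Psi> (\<omega> * t) * Sper A p T t)))"

end

theory Submission
  imports Defs
begin

text \<open>
  Between impulses u = 1/S satisfies u' = 1 - A u + b I u, so on the invariant line I = 0 it is
  explicit; for p < p1 this gives the positive orbit (\<S>, 0).  Since the integral of \<S> over a
  period is A T + ln (1 - p), the I-equation linearised at the orbit has, for the constant rate
  \<beta>0, the Floquet exponent \<beta>0 (A T + ln (1 - p)) - (\<sigma> + g) T.  The seasonal term adds
  \<beta>0 \<gamma> int_0^T \<Psi>(\<omega> t) \<S>(t) dt \<le> \<beta>0 \<gamma> (sup \<Psi>) A T, and the sign of the perturbed exponent is
  exactly the comparison of p2_seas with p.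
  If the unperturbed exponent is negative, |1/S - u0| + K |I| contracts by a fixed factor over
  every period near the orbit, uniformly for all rates close enough to \<beta>0, so the orbit is
  asymptotically stable for small \<gamma>.  If it is nonnegative, a small I < 0 keeps S above the
  orbit and |I| grows at least by the factor exp (\<lambda> |I|) per period.  If p \<ge> p1 then
  \<S>(0) \<le> 0 and 1/S drifts off linearly along I = 0; for p = 1 the impulse kills S outright.
\<close>

lemma has_vector_derivative_fst_real:
  assumes "(y has_vector_derivative v) (at t)"
  shows "((\<lambda>t. fst (y t)) has_real_derivative fst v) (at t)"
  using has_derivative_fst[OF assms[unfolded has_vector_derivative_def]]
  by (simp add: has_real_derivative_iff_has_vector_derivative has_vector_derivative_def)

lemma has_vector_derivative_snd_real:
  assumes "(y has_vector_derivative v) (at t)"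
  shows "((\<lambda>t. snd (y t)) has_real_derivative snd v) (at t)"
  using has_derivative_snd[OF assms[unfolded has_vector_derivative_def]]
  by (simp add: has_real_derivative_iff_has_vector_derivative has_vector_derivative_def)

lemma DERIV_nonpos_imp_le_Icc:
  fixes f f' :: "real \<Rightarrow> real"
  assumes "a \<le> b" "continuous_on {a..b} f"
    and "\<And>r. a < r \<Longrightarrow> r < b \<Longrightarrow> (f has_real_derivative f' r) (at r)"
    and "\<And>r. a < r \<Longrightarrow> r < b \<Longrightarrow> f' r \<le> 0"
  shows "f b \<le> f a"
  using DERIV_nonpos_imp_decreasing_open[OF assms(1) _ assms(2)] assms(3,4) by blast

lemma DERIV_nonneg_imp_ge_Icc:
  fixes f f' :: "real \<Rightarrow> real"
  assumes "a \<le> b" "continuous_on {a..b} f"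
    and "\<And>r. a < r \<Longrightarrow> r < b \<Longrightarrow> (f has_real_derivative f' r) (at r)"
    and "\<And>r. a < r \<Longrightarrow> r < b \<Longrightarrow> f' r \<ge> 0"
  shows "f a \<le> f b"
  using DERIV_nonneg_imp_increasing_open[OF assms(1) _ assms(2)] assms(3,4) by blast

lemma continuous_on_Icc_fun_upd_left_limit:
  fixes x :: "real \<Rightarrow> 'a::topological_space"
  assumes "a < b" "continuous_on {a..<b} x" "(x \<longlongrightarrow> L) (at_left b)"
  shows "continuous_on {a..b} (x(b:=L))"
  unfolding continuous_on_def
proof
  fix t assume t: "t \<in> {a..b}"
  have at_b: "((x(b:=L)) \<longlongrightarrow> l) (at t within {b})" for l
  proof -
    have "at t within {b} = bot" by (cases "t = b") (auto simp: at_within_eq_bot_iff)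
    then show ?thesis by simp
  qed
  have agree: "\<forall>\<^sub>F s in at t within {a..<b}. x s = (x(b:=L)) s"
    by (auto simp: eventually_at_filter)
  have "((x(b:=L)) \<longlongrightarrow> (x(b:=L)) t) (at t within {a..<b})"
  proof (cases "t = b")
    case True
    have "(x \<longlongrightarrow> L) (at b within {a..<b})"
      using assms(3) by (rule tendsto_within_subset) auto
    then show ?thesis using True tendsto_cong[OF agree] by (simp add: fun_upd_def)
  next
    case False
    then have "t \<in> {a..<b}" using t by auto
    then have "(x \<longlongrightarrow> x t) (at t within {a..<b})"
      using assms(2) by (simp add: continuous_on_def)
    then show ?thesis using False tendsto_cong[OF agree] by (simp add: fun_upd_def)
  qed
  then have "((x(b:=L)) \<longlongrightarrow> (x(b:=L)) t) (at t within {a..<b} \<union> {b})"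
    using at_b[of "(x(b:=L)) t"] Lim_within_Un by blast
  moreover have "{a..<b} \<union> {b} = {a..b}" using assms(1) by auto
  ultimately show "((x(b:=L)) \<longlongrightarrow> (x(b:=L)) t) (at t within {a..b})" by simp
qed

lemma abs_diff_le_by_DERIV_bound:
  fixes f f' :: "real \<Rightarrow> real"
  assumes ab: "a \<le> b" and cont: "continuous_on {a..b} f"
    and deriv: "\<And>r. a < r \<Longrightarrow> r < b \<Longrightarrow> (f has_real_derivative f' r) (at r)"
    and bound: "\<And>r. a < r \<Longrightarrow> r < b \<Longrightarrow> \<bar>f' r\<bar> \<le> B"
  shows "\<bar>f b - f a\<bar> \<le> B * (b - a)"
proof -
  have f'_bounds: "- B \<le> f' r" "f' r \<le> B" if "a < r" "r < b" for r
    using bound[OF that] by auto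
  have "f b - B*b \<le> f a - B*a"
  proof (rule DERIV_nonpos_imp_le_Icc[OF ab])
    show "continuous_on {a..b} (\<lambda>r. f r - B*r)" using cont by (intro continuous_intros)
    fix r assume r: "a < r" "r < b"
    show "((\<lambda>r. f r - B*r) has_real_derivative f' r - B) (at r)"
      using deriv[OF r] by (auto intro!: derivative_eq_intros)
    show "f' r - B \<le> 0" using f'_bounds[OF r] by simp
  qed
  moreover have "f a + B*a \<le> f b + B*b"
  proof (rule DERIV_nonneg_imp_ge_Icc[OF ab])
    show "continuous_on {a..b} (\<lambda>r. f r + B*r)" using cont by (intro continuous_intros)
    fix r assume r: "a < r" "r < b"
    show "((\<lambda>r. f r + B*r) has_real_derivative f' r + B) (at r)"
      using deriv[OF r] by (auto intro!: derivative_eq_intros)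
    show "f' r + B \<ge> 0" using f'_bounds[OF r] by simp
  qed
  ultimately show ?thesis by (simp add: abs_le_iff algebra_simps)
qed

lemma abs_mult_diff_le:
  fixes x1 x2 y1 y2 X Y :: real
  assumes "\<bar>y1\<bar> \<le> Y" "\<bar>x2\<bar> \<le> X"
  shows "\<bar>x1*y1 - x2*y2\<bar> \<le> \<bar>x1 - x2\<bar>*Y + X*\<bar>y1 - y2\<bar>"
proof -
  have "x1*y1 - x2*y2 = (x1 - x2)*y1 + x2*(y1 - y2)" by (simp add: algebra_simps)
  then have "\<bar>x1*y1 - x2*y2\<bar> \<le> \<bar>x1 - x2\<bar>*\<bar>y1\<bar> + \<bar>x2\<bar>*\<bar>y1 - y2\<bar>"
    by (simp add: abs_mult[symmetric] abs_triangle_ineq)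
  also have "\<dots> \<le> \<bar>x1 - x2\<bar>*Y + X*\<bar>y1 - y2\<bar>"
    using assms by (intro add_mono mult_mono) auto
  finally show ?thesis .
qed

lemma norm_prod_le_abs_sum: "norm (z::real\<times>real) \<le> \<bar>fst z\<bar> + \<bar>snd z\<bar>"
proof -
  have "norm z = norm ((fst z, 0) + (0, snd z))" by simp
  also have "\<dots> \<le> norm (fst z, (0::real)) + norm ((0::real), snd z)" by (rule norm_triangle_ineq)
  finally show ?thesis by (simp add: norm_Pair)
qed

lemma abs_fst_le_norm: "\<bar>fst (z::real\<times>real)\<bar> \<le> norm z"
  by (cases z) (metis fst_conv norm_fst_le real_norm_def)

lemma abs_snd_le_norm: "\<bar>snd (z::real\<times>real)\<bar> \<le> norm z"
  by (cases z) (metis snd_conv norm_snd_le real_norm_def)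

lemma abs_le_of_weighted_sq_le:
  fixes x y u w :: real
  assumes "x\<^sup>2 * exp (-2*u) \<le> y\<^sup>2 * exp (-2*w)"
  shows "\<bar>x\<bar> \<le> \<bar>y\<bar> * exp (u - w)"
proof -
  have "x\<^sup>2 = (x\<^sup>2 * exp (-2*u)) * exp (2*u)" by (simp add: mult.assoc flip: exp_add)
  also have "\<dots> \<le> (y\<^sup>2 * exp (-2*w)) * exp (2*u)" using assms by simp
  also have "\<dots> = (y * exp (u - w))\<^sup>2"
    by (simp add: power_mult_distrib mult.assoc flip: exp_add exp_of_nat_mult)
  finally show ?thesis using abs_le_square_iff[of x "y * exp (u - w)"] by (simp add: abs_mult)
qed

lemma abs_ge_of_weighted_sq_ge:
  fixes x y u w :: real
  assumes "y\<^sup>2 * exp (-2*w) \<le> x\<^sup>2 * exp (-2*u)"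
  shows "\<bar>y\<bar> * exp (u - w) \<le> \<bar>x\<bar>"
proof -
  have "(y * exp (u - w))\<^sup>2 = (y\<^sup>2 * exp (-2*w)) * exp (2*u)"
    by (simp add: power_mult_distrib mult.assoc flip: exp_add exp_of_nat_mult)
  also have "\<dots> \<le> (x\<^sup>2 * exp (-2*u)) * exp (2*u)" using assms by simp
  also have "\<dots> = x\<^sup>2" by (simp add: mult.assoc flip: exp_add)
  finally show ?thesis using abs_le_square_iff[of "y * exp (u - w)" x] by (simp add: abs_mult)
qed

section \<open>Existence of solutions for a bounded Lipschitz field\<close>

lemma integral_exp_linear:
  fixes L a x :: real assumes "a \<le> x"
  shows "integral {a..x} (\<lambda>s. L * exp (L*(s-a))) = exp (L*(x-a)) - 1"
proof -
  have "((\<lambda>s. L * exp (L*(s-a))) has_integral (exp (L*(x-a)) - exp (L*(a-a)))) {a..x}"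
    by (rule fundamental_theorem_of_calculus[OF assms])
      (auto intro!: derivative_eq_intros simp: has_real_derivative_iff_has_vector_derivative[symmetric])
  then have "((\<lambda>s. L * exp (L*(s-a))) has_integral (exp (L*(x-a)) - 1)) {a..x}" by simp
  then show ?thesis by (rule integral_unique)
qed

text \<open>
  Picard iteration in the Bielecki norm: writing x t = exp (L (t - a)) v t, the integral
  operator becomes a contraction with constant 1 - exp (-L (b - a)) on the whole of [a, b].
  Times are clamped to [a, b] so that the iterates live in the complete space of bounded
  continuous functions on \<real>.
\<close>
locale bounded_lipschitz_ivp =
  fixes G :: "real \<Rightarrow> 'a::banach \<Rightarrow> 'a" and L M a b :: real and y0 :: 'a
  assumes L_pos: "L > 0"
    and lipschitz: "\<And>t z w. norm (G t z - G t w) \<le> L * norm (z - w)"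
    and bounded: "\<And>t z. norm (G t z) \<le> M"
    and continuous: "\<And>x. continuous_on UNIV x \<Longrightarrow> continuous_on {a..b} (\<lambda>t. G t (x t))"
    and a_less_b: "a < b"
begin

definition "clip t = max a (min b t)"
definition weighted :: "(real \<Rightarrow>\<^sub>C 'a) \<Rightarrow> real \<Rightarrow> 'a" where
  "weighted v t = exp (L*(clip t - a)) *\<^sub>R apply_bcontfun v t"
definition "integrand v s = G s (weighted v s)"
definition "picard_fun v t = exp (-L*(clip t - a)) *\<^sub>R (y0 + integral {a..clip t} (integrand v))"
definition "picard_op v = Bcontfun (picard_fun v)"

lemma clip_in: "clip t \<in> {a..b}"
  using a_less_b by (auto simp: clip_def)

lemma clip_id: "t \<in> {a..b} \<Longrightarrow> clip t = t"
  by (auto simp: clip_def)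

lemma continuous_on_clip: "continuous_on S clip"
  unfolding clip_def by (intro continuous_intros)

lemma continuous_on_weighted: "continuous_on S (weighted v)"
proof -
  have "continuous_on UNIV (weighted v)"
    unfolding weighted_def[abs_def] by (intro continuous_intros continuous_on_clip) simp
  then show ?thesis by (rule continuous_on_subset) simp
qed

lemma continuous_on_integrand: "continuous_on {a..b} (integrand v)"
  unfolding integrand_def using continuous[OF continuous_on_weighted] .

lemma integrand_integrable: "x \<le> b \<Longrightarrow> integrand v integrable_on {a..x}"
  using integrable_continuous_real[OF continuous_on_integrand]
  by (metis atLeastatMost_subset_iff integrable_on_subinterval order_refl)

lemma picard_fun_bcontfun: "picard_fun v \<in> bcontfun"
  unfolding bcontfun_def mem_Collect_eq bounded_iff
proof (intro conjI exI ballI)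
  have "continuous_on {a..b} (\<lambda>x. integral {a..x} (integrand v))"
    by (rule indefinite_integral_continuous_1[OF integrable_continuous_real[OF continuous_on_integrand]])
  then have "continuous_on UNIV (\<lambda>t. integral {a..clip t} (integrand v))"
    by (rule continuous_on_compose2[OF _ continuous_on_clip]) (use clip_in in auto)
  then show "continuous_on UNIV (picard_fun v)" unfolding picard_fun_def
    by (intro continuous_intros continuous_on_clip)
next
  fix y assume "y \<in> range (picard_fun v)"
  then obtain t where y: "y = picard_fun v t" by auto
  have t: "a \<le> clip t" "clip t \<le> b" using clip_in[of t] by auto
  have "norm (integral {a..clip t} (integrand v)) \<le> integral {a..clip t} (\<lambda>_. M)"
    by (rule integral_norm_bound_integral) (use integrand_integrable t in \<open>auto simp: integrand_def bounded\<close>)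
  also have "\<dots> = M * (clip t - a)" using t by simp
  also have "\<dots> \<le> \<bar>M\<bar> * (b - a)" using t by (intro mult_mono) auto
  finally have int_le: "norm (integral {a..clip t} (integrand v)) \<le> \<bar>M\<bar> * (b - a)" .
  have exp_le: "exp (-L*(clip t - a)) \<le> 1" using t L_pos by (auto simp: mult_nonneg_nonneg)
  have "norm y = exp (-L*(clip t - a)) * norm (y0 + integral {a..clip t} (integrand v))"
    by (simp add: y picard_fun_def)
  also have "\<dots> \<le> 1 * (norm y0 + \<bar>M\<bar> * (b - a))"
    using int_le norm_triangle_ineq[of y0 "integral {a..clip t} (integrand v)"]
    by (intro mult_mono[OF exp_le]) auto
  finally show "norm y \<le> norm y0 + \<bar>M\<bar> * (b - a)" by simp
qed

lemma apply_picard_op: "apply_bcontfun (picard_op v) = picard_fun v"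
  unfolding picard_op_def using picard_fun_bcontfun by (simp add: Bcontfun_inverse)

lemma integrand_diff_bound:
  assumes "s \<in> {a..b}"
  shows "norm (integrand v s - integrand w s) \<le> dist v w * (L * exp (L*(s-a)))"
proof -
  have "norm (integrand v s - integrand w s) \<le> L * norm (weighted v s - weighted w s)"
    unfolding integrand_def by (rule lipschitz)
  also have "weighted v s - weighted w s = exp (L*(s-a)) *\<^sub>R (apply_bcontfun v s - apply_bcontfun w s)"
    using assms by (simp add: weighted_def clip_id scaleR_diff_right)
  also have "L * norm \<dots> = L * exp (L*(s-a)) * dist (apply_bcontfun v s) (apply_bcontfun w s)"
    by (simp add: dist_norm)
  also have "\<dots> \<le> L * exp (L*(s-a)) * dist v w"
    using L_pos by (intro mult_left_mono dist_bounded) auto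
  finally show ?thesis by (simp add: algebra_simps)
qed

lemma picard_op_contraction:
  "dist (picard_op v) (picard_op w) \<le> (1 - exp (-L*(b-a))) * dist v w"
proof (rule dist_bound)
  fix t
  let ?x = "clip t"
  have x: "a \<le> ?x" "?x \<le> b" using clip_in[of t] by auto
  have "norm (integral {a..?x} (integrand v) - integral {a..?x} (integrand w))
      = norm (integral {a..?x} (\<lambda>s. integrand v s - integrand w s))"
    using integrand_integrable[OF x(2)] by (simp add: integral_diff)
  also have "\<dots> \<le> integral {a..?x} (\<lambda>s. dist v w * (L * exp (L*(s-a))))"
  proof (rule integral_norm_bound_integral)
    show "(\<lambda>s. integrand v s - integrand w s) integrable_on {a..?x}"
      by (intro integrable_diff integrand_integrable x(2))
    show "(\<lambda>s. dist v w * (L * exp (L * (s - a)))) integrable_on {a..?x}"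
      by (intro integrable_continuous_real continuous_intros)
  qed (use integrand_diff_bound x in auto)
  also have "\<dots> = dist v w * (exp (L*(?x-a)) - 1)"
    using integral_exp_linear[OF x(1), of L] by simp
  finally have int_le: "norm (integral {a..?x} (integrand v) - integral {a..?x} (integrand w))
      \<le> dist v w * (exp (L*(?x-a)) - 1)" .
  have "dist (apply_bcontfun (picard_op v) t) (apply_bcontfun (picard_op w) t)
      = exp (-L*(?x - a)) * norm (integral {a..?x} (integrand v) - integral {a..?x} (integrand w))"
    by (simp add: apply_picard_op picard_fun_def dist_norm flip: scaleR_diff_right)
  also have "\<dots> \<le> exp (-L*(?x - a)) * (dist v w * (exp (L*(?x-a)) - 1))"
    by (rule mult_left_mono[OF int_le]) simp
  also have "\<dots> = dist v w * (1 - exp (-L*(?x - a)))"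
    by (simp add: algebra_simps flip: exp_add)
  also have "\<dots> \<le> dist v w * (1 - exp (-L*(b-a)))"
    using x L_pos by (intro mult_left_mono) (auto simp: mult_left_mono)
  finally show "dist (apply_bcontfun (picard_op v) t) (apply_bcontfun (picard_op w) t)
      \<le> (1 - exp (-L*(b-a))) * dist v w"
    by (simp add: mult.commute)
qed

lemma fixpoint_solves:
  assumes fixed: "picard_op v = v"
  shows "continuous_on {a..b} (weighted v)" "weighted v a = y0"
    "\<And>t. t \<in> {a<..<b} \<Longrightarrow> (weighted v has_vector_derivative G t (weighted v t)) (at t)"
proof -
  have eq: "weighted v t = y0 + integral {a..t} (integrand v)" if "t \<in> {a..b}" for t
  proof -
    have "apply_bcontfun v t = picard_fun v t" using fixed apply_picard_op by metis
    then show ?thesis unfolding weighted_def picard_fun_def clip_id[OF that]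
      by (simp add: exp_minus_inverse flip: exp_add)
  qed
  show "continuous_on {a..b} (weighted v)" by (rule continuous_on_weighted)
  show "weighted v a = y0" using eq[of a] a_less_b by simp
  fix t assume t: "t \<in> {a<..<b}"
  have "((\<lambda>u. y0 + integral {a..u} (integrand v)) has_vector_derivative integrand v t) (at t within {a..b})"
    using integral_has_vector_derivative[OF continuous_on_integrand, of t] t
    by (auto intro!: derivative_eq_intros)
  then have "((\<lambda>u. y0 + integral {a..u} (integrand v)) has_vector_derivative integrand v t) (at t)"
    using t by (simp add: at_within_Icc_at)
  then have "(weighted v has_vector_derivative integrand v t) (at t)"
    by (rule has_vector_derivative_transform_within_open[of _ _ _ "{a<..<b}"]) (use t eq in auto)
  then show "(weighted v has_vector_derivative G t (weighted v t)) (at t)"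
    by (simp add: integrand_def)
qed

theorem solution_exists:
  "\<exists>x. continuous_on {a..b} x \<and> x a = y0 \<and> (\<forall>t\<in>{a<..<b}. (x has_vector_derivative G t (x t)) (at t))"
proof -
  have "0 \<le> 1 - exp (-L*(b-a))" "1 - exp (-L*(b-a)) < 1" using L_pos a_less_b by auto
  then obtain v where "picard_op v = v"
    using banach_fix_type picard_op_contraction by metis
  then show ?thesis using fixpoint_solves by blast
qed

end

section \<open>Impulsive solutions glued from segments\<close>

lemma nat_floor_div_eq:
  fixes T t :: real
  assumes "T > 0" "t \<in> {real n*T..<real n*T+T}"
  shows "nat \<lfloor>t/T\<rfloor> = n"
proof -
  have "real n \<le> t/T" "t/T < real n + 1" using assms by (auto simp: field_simps)
  then have "\<lfloor>t/T\<rfloor> = int n" by (intro floor_unique) auto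
  then show ?thesis by simp
qed

lemma impulsive_solution_glue:
  fixes z :: "nat \<Rightarrow> real \<Rightarrow> real \<times> real" and T :: real
  assumes T_pos: "T > 0"
    and cont: "\<And>n. continuous_on {real n*T..real n*T+T} (z n)"
    and deriv: "\<And>n r. r \<in> {real n*T<..<real n*T+T} \<Longrightarrow> (z n has_vector_derivative F r (z n r)) (at r)"
    and jump: "\<And>n. z (Suc n) (real (Suc n)*T) = J (z n (real n*T+T))"
  shows "impulsive_solution F J T (\<lambda>t. z (nat \<lfloor>t/T\<rfloor>) t)"
proof -
  define x where "x t = z (nat \<lfloor>t/T\<rfloor>) t" for t
  have xn: "x t = z n t" if "t \<in> {real n*T..<real n*T+T}" for n t
    using nat_floor_div_eq[OF T_pos that] by (simp add: x_def)
  have e: "real (Suc n) * T = real n*T+T" for n by (simp add: algebra_simps)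
  have "impulsive_solution F J T x"
    unfolding impulsive_solution_def e
  proof (intro allI conjI ballI)
    fix n
    show "continuous_on {real n*T..<real n*T+T} x"
    proof (rule continuous_on_eq[of _ "z n"])
      show "continuous_on {real n*T..<real n*T+T} (z n)"
        by (rule continuous_on_subset[OF cont]) auto
    qed (use xn[of _ n] in auto)
    fix r assume r: "r \<in> {real n*T<..<real n*T+T}"
    have "(z n has_vector_derivative F r (x r)) (at r)" using deriv[OF r] xn[of r n] r by simp
    then show "(x has_vector_derivative F r (x r)) (at r)"
      by (rule has_vector_derivative_transform_within_open[of _ _ _ "{real n*T<..<real n*T+T}"])
        (use r xn[of _ n] in \<open>auto simp del: atLeastLessThan_iff\<close>, metis atLeastLessThan_iff less_le)
  next
    fix n
    have "(z n \<longlongrightarrow> z n (real n*T+T)) (at_left (real n*T+T))"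
      by (rule continuous_on_Icc_at_leftD[OF cont]) (use T_pos in simp)
    moreover have "\<forall>\<^sub>F t in at_left (real n*T+T). z n t = x t"
      using eventually_at_left_real[of "real n*T" "real n*T+T"] T_pos
      by (auto elim!: eventually_mono intro!: xn[of _ n, symmetric])
    ultimately have "(x \<longlongrightarrow> z n (real n*T+T)) (at_left (real n*T+T))"
      using tendsto_cong by blast
    moreover have "x (real n*T+T) = J (z n (real n*T+T))"
    proof -
      have "nat \<lfloor>real (Suc n)*T/T\<rfloor> = Suc n" using T_pos by simp
      then have "x (real (Suc n)*T) = z (Suc n) (real (Suc n)*T)" by (simp only: x_def)
      then show ?thesis using jump[of n] by (simp only: e)
    qed
    ultimately show "\<exists>L. (x \<longlongrightarrow> L) (at_left (real n*T+T)) \<and> x (real n*T+T) = J L" by blast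
  qed
  then show ?thesis by (simp add: x_def[abs_def])
qed

section \<open>The SI system with a bounded continuous transmission rate\<close>

locale si_system =
  fixes A \<beta>0 \<sigma> g p T bM :: real and b :: "real \<Rightarrow> real"
  assumes A_pos: "0 < A" and \<beta>0_pos: "0 < \<beta>0" and removal_pos: "0 < \<sigma> + g"
    and p_nonneg: "0 \<le> p" and p_less_1: "p < 1" and T_pos: "0 < T"
    and b_cont: "continuous_on UNIV b" and b_lower: "\<And>t. \<beta>0 \<le> b t" and b_upper: "\<And>t. b t \<le> bM"
begin

definition "c = \<sigma> + g"
definition "F = si_field b A \<sigma> g"

lemma c_pos: "c > 0" using removal_pos by (simp add: c_def)
lemma bM_ge_\<beta>0: "bM \<ge> \<beta>0" using b_lower[of 0] b_upper[of 0] by simp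
lemma F_eq: "F t z = (fst z*(A - fst z) - b t * snd z * fst z, b t * snd z * fst z - c * snd z)"
  by (simp add: F_def si_field_def c_def)

lemma b_cont_on: "continuous_on S b" using b_cont by (rule continuous_on_subset) auto

context
  fixes y :: "real \<Rightarrow> real \<times> real" and a t1 :: real
  assumes at1: "a \<le> t1" and cy: "continuous_on {a..t1} y"
    and dy: "\<And>r. r \<in> {a<..<t1} \<Longrightarrow> (y has_vector_derivative F r (y r)) (at r)"
begin

lemma S_deriv: "r \<in> {a<..<t1} \<Longrightarrow> ((\<lambda>r. fst (y r)) has_real_derivative
    (fst (y r)*(A - fst (y r)) - b r * snd (y r) * fst (y r))) (at r)"
  using has_vector_derivative_fst_real[OF dy] by (simp add: F_eq)

lemma I_deriv: "r \<in> {a<..<t1} \<Longrightarrow> ((\<lambda>r. snd (y r)) has_real_derivative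
    (b r * snd (y r) * fst (y r) - c * snd (y r))) (at r)"
  using has_vector_derivative_snd_real[OF dy] by (simp add: F_eq)

text \<open>The growth rate of I is b S - c; both comparisons differentiate I^2 exp (-2 \<phi>).\<close>
lemma I_upper_comparison:
  fixes \<phi> \<psi> :: "real \<Rightarrow> real"
  assumes cphi: "continuous_on {a..t1} \<phi>"
    and dphi: "\<And>r. r \<in> {a<..<t1} \<Longrightarrow> (\<phi> has_real_derivative \<psi> r) (at r)"
    and rate: "\<And>r. r \<in> {a<..<t1} \<Longrightarrow> b r * fst (y r) - c \<le> \<psi> r"
  shows "\<bar>snd (y t1)\<bar> \<le> \<bar>snd (y a)\<bar> * exp (\<phi> t1 - \<phi> a)"
proof (rule abs_le_of_weighted_sq_le, rule DERIV_nonpos_imp_le_Icc[OF at1])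
  show "continuous_on {a..t1} (\<lambda>r. (snd (y r))\<^sup>2 * exp (-2*\<phi> r))"
    using cy cphi by (intro continuous_intros)
  fix r assume r: "a < r" "r < t1"
  show "((\<lambda>r. (snd (y r))\<^sup>2 * exp (-2*\<phi> r)) has_real_derivative
     (2 * (snd (y r))\<^sup>2 * exp (-2*\<phi> r) * ((b r * fst (y r) - c) - \<psi> r))) (at r)"
    using r by (auto intro!: derivative_eq_intros I_deriv dphi simp: algebra_simps power2_eq_square)
  have "(b r * fst (y r) - c) - \<psi> r \<le> 0" using rate r by auto
  then show "2 * (snd (y r))\<^sup>2 * exp (-2*\<phi> r) * ((b r * fst (y r) - c) - \<psi> r) \<le> 0"
    by (simp add: mult_nonneg_nonpos)
qed

lemma I_lower_comparison:
  fixes \<phi> \<psi> :: "real \<Rightarrow> real"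
  assumes cphi: "continuous_on {a..t1} \<phi>"
    and dphi: "\<And>r. r \<in> {a<..<t1} \<Longrightarrow> (\<phi> has_real_derivative \<psi> r) (at r)"
    and rate: "\<And>r. r \<in> {a<..<t1} \<Longrightarrow> b r * fst (y r) - c \<ge> \<psi> r"
  shows "\<bar>snd (y a)\<bar> * exp (\<phi> t1 - \<phi> a) \<le> \<bar>snd (y t1)\<bar>"
proof (rule abs_ge_of_weighted_sq_ge, rule DERIV_nonneg_imp_ge_Icc[OF at1])
  show "continuous_on {a..t1} (\<lambda>r. (snd (y r))\<^sup>2 * exp (-2*\<phi> r))"
    using cy cphi by (intro continuous_intros)
  fix r assume r: "a < r" "r < t1"
  show "((\<lambda>r. (snd (y r))\<^sup>2 * exp (-2*\<phi> r)) has_real_derivative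
     (2 * (snd (y r))\<^sup>2 * exp (-2*\<phi> r) * ((b r * fst (y r) - c) - \<psi> r))) (at r)"
    using r by (auto intro!: derivative_eq_intros I_deriv dphi simp: algebra_simps power2_eq_square)
  have "(b r * fst (y r) - c) - \<psi> r \<ge> 0" using rate r by auto
  then show "2 * (snd (y r))\<^sup>2 * exp (-2*\<phi> r) * ((b r * fst (y r) - c) - \<psi> r) \<ge> 0"
    by simp
qed

end

lemma impulsive_solution_period:
  assumes sol: "impulsive_solution F (si_jump p) T x"
  obtains L where "continuous_on {real k*T..real k*T+T} (x(real k*T+T:=L))"
    "\<And>r. r \<in> {real k*T<..<real k*T+T} \<Longrightarrow>
       ((x(real k*T+T:=L)) has_vector_derivative F r ((x(real k*T+T:=L)) r)) (at r)"
    "(x(real k*T+T:=L)) (real k*T) = x (real k*T)"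
    "(x(real k*T+T:=L)) (real k*T+T) = L"
    "x (real (Suc k)*T) = si_jump p L"
proof -
  have e: "real (Suc k) * T = real k*T+T" by (simp add: algebra_simps)
  obtain L where cont: "continuous_on {real k*T..<real k*T+T} x"
    and d: "\<And>r. r \<in> {real k*T<..<real k*T+T} \<Longrightarrow> (x has_vector_derivative F r (x r)) (at r)"
    and l: "(x \<longlongrightarrow> L) (at_left (real k*T+T))" and j: "x (real k*T+T) = si_jump p L"
    using sol[unfolded impulsive_solution_def, THEN spec[of _ k], unfolded e] by blast
  show ?thesis
  proof
    show "continuous_on {real k*T..real k*T+T} (x(real k*T+T:=L))"
      by (rule continuous_on_Icc_fun_upd_left_limit[OF _ cont l]) (use T_pos in simp)
    fix r assume r: "r \<in> {real k*T<..<real k*T+T}"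
    have "(x has_vector_derivative F r ((x(real k*T+T:=L)) r)) (at r)" using d[OF r] r by simp
    then show "((x(real k*T+T:=L)) has_vector_derivative F r ((x(real k*T+T:=L)) r)) (at r)"
      by (rule has_vector_derivative_transform_within_open[of _ _ _ "{real k*T<..<real k*T+T}"])
        (use r in auto)
  qed (use T_pos j e in auto)
qed

subsection \<open>The invariant line I = 0\<close>

lemma I_zero_persists:
  assumes at1: "a \<le> t1" and cy: "continuous_on {a..t1} y"
    and dy: "\<And>r. r \<in> {a<..<t1} \<Longrightarrow> (y has_vector_derivative F r (y r)) (at r)"
    and I0: "snd (y a) = 0" and r: "r \<in> {a..t1}"
  shows "snd (y r) = 0"
proof -
  obtain B where B: "\<And>r. r \<in> {a..t1} \<Longrightarrow> \<bar>fst (y r)\<bar> \<le> B"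
    using continuous_on_compact_bound[of "{a..t1}" "\<lambda>r. fst (y r)"] cy
    by (auto intro: continuous_intros)
  have "\<bar>snd (y r)\<bar> \<le> \<bar>snd (y a)\<bar> * exp ((bM*B + c)*(r-a) - (bM*B + c)*(a-a))"
  proof (rule I_upper_comparison[of a r y])
    fix s assume s: "s \<in> {a<..<r}"
    have "b s * fst (y s) \<le> \<bar>b s\<bar> * \<bar>fst (y s)\<bar>" by (metis abs_ge_self abs_mult)
    also have "\<dots> \<le> bM * B" using b_lower[of s] b_upper[of s] \<beta>0_pos B[of s] s r
      by (intro mult_mono) auto
    finally show "b s * fst (y s) - c \<le> bM*B + c" using c_pos by simp
  next
    show "continuous_on {a..r} y" by (rule continuous_on_subset[OF cy]) (use r in auto)
    show "continuous_on {a..r} (\<lambda>s. (bM*B + c)*(s-a))" by (intro continuous_intros)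
    fix s assume "s \<in> {a<..<r}"
    then show "(y has_vector_derivative F s (y s)) (at s)" using dy r by auto
    show "((\<lambda>s. (bM*B + c)*(s-a)) has_real_derivative bM*B + c) (at s)"
      by (auto intro!: derivative_eq_intros)
  qed (use r in auto)
  then show ?thesis using I0 by simp
qed

lemma S_negative_persists:
  assumes at1: "a \<le> t1" and cy: "continuous_on {a..t1} y"
    and dy: "\<And>r. r \<in> {a<..<t1} \<Longrightarrow> (y has_vector_derivative F r (y r)) (at r)"
    and I0: "\<And>r. r \<in> {a..t1} \<Longrightarrow> snd (y r) = 0" and S_neg: "fst (y a) < 0"
    and r: "r \<in> {a..t1}"
  shows "fst (y r) < 0"
proof -
  obtain B where B: "\<And>r. r \<in> {a..t1} \<Longrightarrow> \<bar>fst (y r)\<bar> \<le> B"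
    using continuous_on_compact_bound[of "{a..t1}" "\<lambda>r. fst (y r)"] cy
    by (auto intro: continuous_intros)
  have nonzero: "fst (y s) \<noteq> 0" if s: "s \<in> {a..t1}" for s
  proof -
    have "(fst (y a))\<^sup>2 * exp (2*((A+B)*(a-a))) \<le> (fst (y s))\<^sup>2 * exp (2*((A+B)*(s-a)))"
    proof (rule DERIV_nonneg_imp_ge_Icc[of a s])
      show "a \<le> s" using s by simp
      show "continuous_on {a..s} (\<lambda>s. (fst (y s))\<^sup>2 * exp (2*((A+B)*(s-a))))"
        using continuous_on_subset[OF cy, of "{a..s}"] s by (intro continuous_intros) auto
      fix u assume u: "a < u" "u < s"
      have uI: "u \<in> {a<..<t1}" using u s by auto
      show "((\<lambda>s. (fst (y s))\<^sup>2 * exp (2*((A+B)*(s-a)))) has_real_derivative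
          2 * (fst (y u))\<^sup>2 * exp (2*((A+B)*(u-a))) * (A - fst (y u) + (A+B))) (at u)"
        using I0[of u] uI
        by (auto intro!: derivative_eq_intros S_deriv[OF at1 cy dy] simp: algebra_simps power2_eq_square)
      have "fst (y u) \<le> B" using B[of u] uI by auto
      then show "2 * (fst (y u))\<^sup>2 * exp (2*((A+B)*(u-a))) * (A - fst (y u) + (A+B)) \<ge> 0"
        using A_pos by simp
    qed
    then show ?thesis using S_neg by auto
  qed
  show ?thesis
  proof (rule ccontr)
    assume "\<not> fst (y r) < 0"
    moreover have "continuous_on {a..r} (\<lambda>r. fst (y r))"
      using r cy by (intro continuous_intros) (auto intro: continuous_on_subset)
    ultimately obtain s where "a \<le> s" "s \<le> r" "fst (y s) = 0"
      using IVT'[of "\<lambda>r. fst (y r)" a 0 r] S_neg r by auto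
    then show False using nonzero[of s] r by auto
  qed
qed

text \<open>On I = 0 the reciprocal u = 1/S solves the linear equation u' = 1 - A u.\<close>
lemma I_zero_segment:
  assumes cy: "continuous_on {a..a+T} y"
    and dy: "\<And>r. r \<in> {a<..<a+T} \<Longrightarrow> (y has_vector_derivative F r (y r)) (at r)"
    and I0: "snd (y a) = 0" and S_neg: "fst (y a) < 0"
  shows "snd (y (a+T)) = 0" "fst (y (a+T)) < 0"
    "1/fst (y (a+T)) = exp (-(A*T)) * (1/fst (y a) - 1/A) + 1/A"
proof -
  have aT: "a \<le> a+T" using T_pos by simp
  have I_zero: "snd (y r) = 0" if "r \<in> {a..a+T}" for r
    using I_zero_persists[OF aT cy dy I0 that] .
  have S_neg': "fst (y r) < 0" if "r \<in> {a..a+T}" for r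
    using S_negative_persists[OF aT cy dy I_zero S_neg that] .
  have Snz: "fst (y r) \<noteq> 0" if "r \<in> {a..a+T}" for r using S_neg'[OF that] by simp
  define h where "h r = exp (A*(r-a)) * (1/fst (y r) - 1/A)" for r
  have ch: "continuous_on {a..a+T} h"
    unfolding h_def using cy Snz by (intro continuous_intros) auto
  have dh: "(h has_real_derivative 0) (at r)" if r: "r \<in> {a<..<a+T}" for r
  proof -
    have rb: "r \<in> {a..a+T}" using r by auto
    note Snz = Snz[OF rb]
    have "(h has_real_derivative exp (A*(r-a)) * A * (1/fst (y r) - 1/A) +
        exp (A*(r-a)) * (- ((fst (y r)*(A - fst (y r)) - b r * snd (y r) * fst (y r)) / (fst (y r))\<^sup>2))) (at r)"
      unfolding h_def using Snz r
      by (auto intro!: derivative_eq_intros S_deriv[OF aT cy dy] simp: power2_eq_square)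
         (simp_all add: field_simps)
    moreover have "exp (A*(r-a)) * A * (1/fst (y r) - 1/A) +
        exp (A*(r-a)) * (- ((fst (y r)*(A - fst (y r)) - b r * snd (y r) * fst (y r)) / (fst (y r))\<^sup>2)) = 0"
      using I_zero[OF rb] Snz A_pos by (simp add: field_simps power2_eq_square)
    ultimately show ?thesis by simp
  qed
  have "h (a+T) \<le> h a" by (rule DERIV_nonpos_imp_le_Icc[OF aT ch dh]) auto
  moreover have "h a \<le> h (a+T)" by (rule DERIV_nonneg_imp_ge_Icc[OF aT ch dh]) auto
  ultimately have "h (a+T) = h a" by simp
  then show "1/fst (y (a+T)) = exp (-(A*T)) * (1/fst (y a) - 1/A) + 1/A"
    by (simp add: h_def exp_minus field_simps)
  show "snd (y (a+T)) = 0" "fst (y (a+T)) < 0" using I_zero S_neg' T_pos by auto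
qed

end

section \<open>Estimates near the disease-free periodic orbit\<close>

text \<open>
  For p < p1 the orbit through (\<S>(0), 0) is positive; along it 1/S, taken s time units after
  an impulse, equals us s, the solution of u' = 1 - A u whose value drops from u0 to (1 - p) u0.
\<close>
locale si_positive_orbit = si_system +
  assumes orbit_pos: "exp (A*T)*(1-p) > 1"
begin

definition "Ke = exp (A*T)*(1-p) - 1"
definition "us s = (Ke + p*exp (A*(T-s)))/(A*Ke)"
definition "u0 = us 0"

lemma Ke_pos: "Ke > 0" using orbit_pos by (simp add: Ke_def)
lemma u0_eq: "u0 = (exp (A*T) - 1)/(A*Ke)"
  by (simp add: u0_def us_def Ke_def algebra_simps)
lemma u0_pos: "u0 > 0" using A_pos T_pos Ke_pos by (simp add: u0_eq)
lemma inverse_u0_eq_Sper: "1/u0 = Sper A p T 0"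
  by (simp add: u0_eq Ke_def Sper_def Let_def algebra_simps)
lemma usT: "us T = (1-p)*u0"
  by (simp add: u0_eq us_def Ke_def field_simps)
lemma us_pos: "us s > 0" using A_pos Ke_pos p_nonneg by (simp add: us_def add_pos_nonneg)
lemma us_le: "0 \<le> s \<Longrightarrow> us s \<le> u0"
  using A_pos Ke_pos p_nonneg by (simp add: u0_def us_def divide_right_mono mult_left_mono)
lemma us_ge: assumes "s \<le> T" shows "us s \<ge> (1-p)*u0"
proof -
  have "1 \<le> exp (A*(T-s))" using A_pos assms by simp
  then have "p \<le> p * exp (A*(T-s))" using p_nonneg by (metis mult.right_neutral mult_left_mono)
  then show ?thesis unfolding usT[symmetric] us_def using A_pos Ke_pos by (simp add: divide_right_mono)
qed
lemma us_deriv: "(us has_real_derivative (- A * us s + 1)) (at s)"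
  unfolding us_def using A_pos Ke_pos
  by (auto intro!: derivative_eq_intros simp: field_simps)

text \<open>Phi a is a primitive of S along the orbit started at time a.\<close>
definition "Phi a r = A*(r-a) + ln (Ke + p*exp (A*(T-(r-a))))"

lemma Phi_arg_pos: "Ke + p*exp (A*(T-(r-a))) > 0" using Ke_pos p_nonneg by (simp add: add_pos_nonneg)

lemma Phi_deriv: "(Phi a has_real_derivative 1/us (r-a)) (at r)"
proof -
  have "(Phi a has_real_derivative A + (p*(exp (A*(T-(r-a))) * (- A)))/(Ke + p*exp (A*(T-(r-a))))) (at r)"
    unfolding Phi_def using Phi_arg_pos[of r a]
    by (auto intro!: derivative_eq_intros)
  moreover have "A + (p*(exp (A*(T-(r-a))) * (- A)))/(Ke + p*exp (A*(T-(r-a)))) = 1/us (r-a)"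
    using Phi_arg_pos[of r a] A_pos Ke_pos by (simp add: us_def field_simps)
  ultimately show ?thesis by simp
qed

lemma Phi_cont: "continuous_on S (Phi a)"
  unfolding Phi_def using Phi_arg_pos by (intro continuous_intros) (metis less_irrefl)

lemma Phi_period: "Phi a (a+T) - Phi a a = A*T + ln (1-p)"
proof -
  have e: "Ke + p = (1-p)*(exp (A*T) - 1)" "Ke + p*exp (A*T) = exp (A*T) - 1"
    by (simp_all add: Ke_def algebra_simps)
  have pos: "exp (A*T) - 1 > 0" using A_pos T_pos by simp
  show ?thesis unfolding Phi_def using e pos p_less_1 A_pos T_pos by (simp add: ln_mult)
qed

definition "recip_dev y a r = exp (A*(r-a)) * (1/fst (y r) - us (r-a))"

lemma recip_dev_start: "recip_dev y a a = 1/fst (y a) - u0"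
  by (simp add: recip_dev_def u0_def)

lemma recip_dev_deriv:
  assumes at1: "a \<le> t1" and cy: "continuous_on {a..t1} y"
    and dy: "\<And>r. r \<in> {a<..<t1} \<Longrightarrow> (y has_vector_derivative F r (y r)) (at r)"
    and r: "r \<in> {a<..<t1}" and S_nz: "fst (y r) \<noteq> 0"
  shows "(recip_dev y a has_real_derivative exp (A*(r-a)) * (b r * snd (y r) / fst (y r))) (at r)"
proof -
  have "(recip_dev y a has_real_derivative
      exp (A*(r-a)) * A * (1/fst (y r) - us (r-a)) +
      exp (A*(r-a)) * (- ((fst (y r)*(A - fst (y r)) - b r * snd (y r) * fst (y r)) / (fst (y r))\<^sup>2)
         - (- A * us (r-a) + 1))) (at r)"
    unfolding recip_dev_def using r S_nz
    by (auto intro!: derivative_eq_intros S_deriv[OF at1 cy dy] DERIV_chain2[OF us_deriv]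
        simp: power2_eq_square) (simp_all add: field_simps)
  moreover have "exp (A*(r-a)) * A * (1/fst (y r) - us (r-a)) +
      exp (A*(r-a)) * (- ((fst (y r)*(A - fst (y r)) - b r * snd (y r) * fst (y r)) / (fst (y r))\<^sup>2)
         - (- A * us (r-a) + 1)) = exp (A*(r-a)) * (b r * snd (y r) / fst (y r))"
    using S_nz by (simp add: field_simps power2_eq_square)
  ultimately show ?thesis by simp
qed

text \<open>
  All estimates are made in box_closed, where 1/S lies between umin and umax; there |b S - c|
  is at most M1, and C2 bounds the variation of recip_dev over one period per unit of |I|.
\<close>
definition "umin = (1-p)*u0/2"
definition "umax = 2*u0"
definition "M1 = bM/umin + c"
definition "C2 = T*exp (A*T)*bM*exp (M1*T)*umax"
definition "box_closed = {z::real\<times>real. 1/umax \<le> fst z \<and> fst z \<le> 1/umin \<and> \<bar>snd z\<bar> \<le> 1}"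

lemma umin_pos: "umin > 0" using p_less_1 u0_pos by (simp add: umin_def)
lemma umax_pos: "umax > 0" using u0_pos by (simp add: umax_def)
lemma M1_pos: "M1 > 0" using umin_pos bM_ge_\<beta>0 \<beta>0_pos c_pos by (simp add: M1_def add_pos_pos)
lemma C2_pos: "C2 > 0" using T_pos bM_ge_\<beta>0 \<beta>0_pos umax_pos by (simp add: C2_def)

lemma box_closed_bounds:
  assumes "z \<in> box_closed"
  shows "fst z > 0" "1/fst z \<le> umax" "1/fst z \<ge> umin" "\<bar>snd z\<bar> \<le> 1"
    "b t * fst z - c \<le> M1" "b t * fst z - c \<ge> - M1"
proof -
  have z1: "1/umax \<le> fst z" and z2: "fst z \<le> 1/umin" and z3: "\<bar>snd z\<bar> \<le> 1"
    using assms by (auto simp: box_closed_def)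
  show pos: "fst z > 0" using z1 umax_pos by (meson less_le_trans zero_less_divide_1_iff)
  show "1/fst z \<le> umax" using z1 umax_pos pos by (simp add: field_simps)
  show "1/fst z \<ge> umin" using z2 umin_pos pos by (simp add: field_simps)
  show "\<bar>snd z\<bar> \<le> 1" by (rule z3)
  have "b t * fst z \<le> bM * (1/umin)"
    using pos z2 b_upper[of t] b_lower[of t] \<beta>0_pos by (intro mult_mono) auto
  then show "b t * fst z - c \<le> M1" using c_pos by (simp add: M1_def)
  have "b t * fst z \<ge> 0" using pos b_lower[of t] \<beta>0_pos by simp
  moreover have "bM/umin \<ge> 0" using umin_pos bM_ge_\<beta>0 \<beta>0_pos by simp
  ultimately show "b t * fst z - c \<ge> - M1" using c_pos by (simp add: M1_def)
qed

lemma I_exp_bounds: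
  assumes at1: "a \<le> t1" and cy: "continuous_on {a..t1} y"
    and dy: "\<And>r. r \<in> {a<..<t1} \<Longrightarrow> (y has_vector_derivative F r (y r)) (at r)"
    and box: "\<And>r. r \<in> {a..t1} \<Longrightarrow> y r \<in> box_closed"
  shows "\<bar>snd (y t1)\<bar> \<le> \<bar>snd (y a)\<bar> * exp (M1*(t1-a))"
    "\<bar>snd (y a)\<bar> * exp (- (M1*(t1-a))) \<le> \<bar>snd (y t1)\<bar>"
proof -
  have "\<bar>snd (y t1)\<bar> \<le> \<bar>snd (y a)\<bar> * exp (M1*(t1-a) - M1*(a-a))"
    by (rule I_upper_comparison[OF at1 cy dy])
      (auto intro!: continuous_intros derivative_eq_intros box_closed_bounds(5)[OF box])
  then show "\<bar>snd (y t1)\<bar> \<le> \<bar>snd (y a)\<bar> * exp (M1*(t1-a))" by simp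
  have "\<bar>snd (y a)\<bar> * exp (-M1*(t1-a) - (-M1*(a-a))) \<le> \<bar>snd (y t1)\<bar>"
    by (rule I_lower_comparison[OF at1 cy dy])
      (auto intro!: continuous_intros derivative_eq_intros box_closed_bounds(6)[OF box])
  then show "\<bar>snd (y a)\<bar> * exp (- (M1*(t1-a))) \<le> \<bar>snd (y t1)\<bar>" by simp
qed

lemma recip_dev_variation:
  assumes at1: "a \<le> t1" and t1T: "t1 \<le> a + T" and cy: "continuous_on {a..t1} y"
    and dy: "\<And>r. r \<in> {a<..<t1} \<Longrightarrow> (y has_vector_derivative F r (y r)) (at r)"
    and box: "\<And>r. r \<in> {a..t1} \<Longrightarrow> y r \<in> box_closed"
  shows "\<bar>recip_dev y a t1 - recip_dev y a a\<bar> \<le> C2 * \<bar>snd (y a)\<bar>"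
proof -
  define B where "B = exp (A*T) * bM * (\<bar>snd (y a)\<bar> * exp (M1*T)) * umax"
  have S_pos: "fst (y r) > 0" if "r \<in> {a..t1}" for r using box_closed_bounds(1)[OF box[OF that]] .
  have "\<bar>recip_dev y a t1 - recip_dev y a a\<bar> \<le> B * (t1 - a)"
  proof (rule abs_diff_le_by_DERIV_bound[OF at1])
    show "continuous_on {a..t1} (recip_dev y a)"
      unfolding recip_dev_def us_def using cy S_pos A_pos Ke_pos
      by (intro continuous_intros) (auto, fastforce)
    fix r assume "a < r" "r < t1"
    then have r: "r \<in> {a<..<t1}" and r1: "a \<le> r" "r \<le> t1" by auto
    show "(recip_dev y a has_real_derivative exp (A*(r-a)) * (b r * snd (y r) / fst (y r))) (at r)"
      using recip_dev_deriv[OF at1 cy dy r] S_pos[of r] r1 by simp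
    have "\<bar>snd (y r)\<bar> \<le> \<bar>snd (y a)\<bar> * exp (M1*(r-a))"
      by (rule I_exp_bounds(1)[OF r1(1)]) (use cy dy box r1 in \<open>auto intro: continuous_on_subset\<close>)
    also have "\<dots> \<le> \<bar>snd (y a)\<bar> * exp (M1*T)"
      using r1 t1T M1_pos by (intro mult_left_mono) auto
    finally have I_le: "\<bar>snd (y r)\<bar> \<le> \<bar>snd (y a)\<bar> * exp (M1*T)" .
    have "\<bar>exp (A*(r-a)) * (b r * snd (y r) / fst (y r))\<bar>
        = exp (A*(r-a)) * b r * \<bar>snd (y r)\<bar> * (1 / fst (y r))"
      using S_pos[of r] r1 b_lower[of r] \<beta>0_pos by (simp add: abs_mult)
    also have "\<dots> \<le> B" unfolding B_def
      using r1 t1T A_pos b_upper[of r] b_lower[of r] \<beta>0_pos I_le box_closed_bounds(2)[OF box] S_pos[of r]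
      by (intro mult_mono) auto
    finally show "\<bar>exp (A*(r-a)) * (b r * snd (y r) / fst (y r))\<bar> \<le> B" .
  qed
  also have "\<dots> \<le> B * T"
    using t1T bM_ge_\<beta>0 \<beta>0_pos umax_pos by (intro mult_left_mono) (auto simp: B_def)
  also have "\<dots> = C2 * \<bar>snd (y a)\<bar>" by (simp add: B_def C2_def)
  finally show ?thesis .
qed

lemma recip_S_deviation:
  assumes at: "a \<le> t" "t \<le> a + T" and cy: "continuous_on {a..t} y"
    and dy: "\<And>r. r \<in> {a<..<t} \<Longrightarrow> (y has_vector_derivative F r (y r)) (at r)"
    and box: "\<And>r. r \<in> {a..t} \<Longrightarrow> y r \<in> box_closed"
  shows "\<bar>1/fst (y t) - us (t-a)\<bar> \<le> \<bar>1/fst (y a) - u0\<bar> + C2*\<bar>snd (y a)\<bar>"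
proof -
  have "1 * \<bar>1/fst (y t) - us (t-a)\<bar> \<le> exp (A*(t-a)) * \<bar>1/fst (y t) - us (t-a)\<bar>"
    using A_pos at by (intro mult_right_mono) auto
  also have "\<dots> = \<bar>recip_dev y a t\<bar>" by (simp add: recip_dev_def abs_mult)
  also have "\<dots> \<le> \<bar>recip_dev y a t - recip_dev y a a\<bar> + \<bar>1/fst (y a) - u0\<bar>"
    using abs_triangle_ineq[of "recip_dev y a t - recip_dev y a a" "recip_dev y a a"]
    by (simp add: recip_dev_start)
  finally have "\<bar>1/fst (y t) - us (t-a)\<bar> \<le> \<bar>recip_dev y a t - recip_dev y a a\<bar> + \<bar>1/fst (y a) - u0\<bar>"
    by simp
  moreover have "\<bar>recip_dev y a t - recip_dev y a a\<bar> \<le> C2 * \<bar>snd (y a)\<bar>"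
    by (rule recip_dev_variation[OF at cy dy box])
  ultimately show ?thesis by linarith
qed

text \<open>
  Solutions starting (\<delta>0, \<eta>0)-close to the orbit stay in box_inner for a whole period; this is
  shown by a continuity argument at the first exit time from the slightly larger box_open.
\<close>
definition "\<delta>0 = (1-p)*u0/8"
definition "\<eta>0 = min (1/(2*exp (M1*T))) ((1-p)*u0/(8*C2))"
definition "lo2 = 3*(1-p)*u0/4"
definition "hi2 = u0 + (1-p)*u0/4"
definition "box_inner = {z::real\<times>real. 1/hi2 \<le> fst z \<and> fst z \<le> 1/lo2 \<and> \<bar>snd z\<bar> \<le> 1/2}"
definition "box_open = {z::real\<times>real. 1/umax < fst z \<and> fst z < 1/umin \<and> \<bar>snd z\<bar> < 1}"

lemma \<delta>0_pos: "\<delta>0 > 0" using p_less_1 u0_pos by (simp add: \<delta>0_def)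
lemma \<eta>0_pos: "\<eta>0 > 0" using p_less_1 u0_pos C2_pos by (simp add: \<eta>0_def)
lemma \<eta>0_growth_le: "\<eta>0 * exp (M1*T) \<le> 1/2"
proof -
  have "\<eta>0 \<le> 1/(2*exp (M1*T))" by (simp add: \<eta>0_def)
  then show ?thesis by (simp add: field_simps)
qed
lemma C2_\<eta>0_le: "C2 * \<eta>0 \<le> (1-p)*u0/8"
proof -
  have "\<eta>0 \<le> (1-p)*u0/(8*C2)" by (simp add: \<eta>0_def)
  then show ?thesis using C2_pos by (simp add: field_simps)
qed
lemma lo2_pos: "lo2 > 0" using p_less_1 u0_pos by (simp add: lo2_def)
lemma hi2_pos: "hi2 > 0" using p_less_1 u0_pos by (simp add: hi2_def add_pos_nonneg)

lemma box_inner_subset_open: "box_inner \<subseteq> box_open"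
proof
  fix z assume z: "z \<in> box_inner"
  have "umin < lo2" using p_less_1 u0_pos by (simp add: umin_def lo2_def)
  then have "1/lo2 < 1/umin" using umin_pos by (simp add: frac_less2)
  moreover have "hi2 < umax" using p_less_1 p_nonneg u0_pos by (simp add: umax_def hi2_def)
  then have "1/umax < 1/hi2" using hi2_pos by (simp add: frac_less2)
  ultimately show "z \<in> box_open" using z by (auto simp: box_inner_def box_open_def)
qed

lemma box_open_subset_closed: "box_open \<subseteq> box_closed"
  by (auto simp: box_open_def box_closed_def)

lemma closed_box_inner: "closed box_inner"
  unfolding box_inner_def by (intro closed_Collect_conj closed_Collect_le continuous_intros)

lemma open_box_open: "open box_open"
  unfolding box_open_def by (intro open_Collect_conj open_Collect_less continuous_intros)

lemma box_innerI:
  assumes "lo2 \<le> 1/fst z" "1/fst z \<le> hi2" "\<bar>snd z\<bar> \<le> 1/2"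
  shows "z \<in> box_inner"
proof -
  have S_pos: "fst z > 0" using assms(1) lo2_pos by (meson less_le_trans zero_less_divide_1_iff)
  have "1/hi2 \<le> fst z" using assms(2) S_pos hi2_pos by (simp add: field_simps)
  moreover have "fst z \<le> 1/lo2" using assms(1) S_pos lo2_pos by (simp add: field_simps)
  ultimately show ?thesis using assms(3) by (simp add: box_inner_def)
qed

lemma near_orbit_in_box_inner:
  assumes at: "a \<le> t" "t \<le> a + T" and cy: "continuous_on {a..t} y"
    and dy: "\<And>r. r \<in> {a<..<t} \<Longrightarrow> (y has_vector_derivative F r (y r)) (at r)"
    and box: "\<And>r. r \<in> {a..t} \<Longrightarrow> y r \<in> box_closed"
    and hu: "\<bar>1/fst (y a) - u0\<bar> \<le> \<delta>0" and hi: "\<bar>snd (y a)\<bar> \<le> \<eta>0"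
  shows "y t \<in> box_inner"
proof (rule box_innerI)
  have "\<bar>snd (y t)\<bar> \<le> \<bar>snd (y a)\<bar> * exp (M1*(t-a))"
    by (rule I_exp_bounds(1)[OF at(1) cy dy box])
  also have "\<dots> \<le> \<eta>0 * exp (M1*T)"
    using hi at M1_pos by (intro mult_mono) auto
  finally show "\<bar>snd (y t)\<bar> \<le> 1/2" using \<eta>0_growth_le by simp
  have "C2 * \<bar>snd (y a)\<bar> \<le> C2 * \<eta>0" using hi C2_pos by (intro mult_left_mono) auto
  then have "\<bar>1/fst (y t) - us (t-a)\<bar> \<le> (1-p)*u0/4"
    using recip_S_deviation[OF at cy dy box] hu C2_\<eta>0_le unfolding \<delta>0_def by linarith
  moreover have "us (t-a) \<le> u0" "us (t-a) \<ge> (1-p)*u0" using us_le us_ge at by auto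
  ultimately show "lo2 \<le> 1/fst (y t)" "1/fst (y t) \<le> hi2"
    unfolding lo2_def hi2_def by linarith+
qed

lemma start_in_box_inner:
  assumes hS: "fst z > 0" and hu: "\<bar>1/fst z - u0\<bar> \<le> \<delta>0" and hi: "\<bar>snd z\<bar> \<le> \<eta>0"
  shows "z \<in> box_inner"
proof (rule box_innerI)
  have "(1-p)*u0 \<le> u0" "0 \<le> (1-p)*u0" using p_nonneg p_less_1 u0_pos by (auto simp: mult_le_cancel_right1)
  then show "lo2 \<le> 1/fst z" "1/fst z \<le> hi2"
    using hu unfolding \<delta>0_def lo2_def hi2_def by linarith+
  have "\<eta>0 * 1 \<le> \<eta>0 * exp (M1*T)" using \<eta>0_pos M1_pos T_pos by (intro mult_left_mono) auto
  then show "\<bar>snd z\<bar> \<le> 1/2" using hi \<eta>0_growth_le by simp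
qed

lemma stays_in_box_open:
  fixes G :: "real \<Rightarrow> real \<times> real \<Rightarrow> real \<times> real"
  assumes G_eq_F: "\<And>t z. z \<in> box_closed \<Longrightarrow> G t z = F t z"
    and cy: "continuous_on {a..a+T} y"
    and dy: "\<And>r. r \<in> {a<..<a+T} \<Longrightarrow> (y has_vector_derivative G r (y r)) (at r)"
    and hS: "fst (y a) > 0" and hu: "\<bar>1/fst (y a) - u0\<bar> \<le> \<delta>0" and hi: "\<bar>snd (y a)\<bar> \<le> \<eta>0"
  shows "\<forall>r\<in>{a..a+T}. y r \<in> box_open"
proof (rule ccontr)
  assume leaves: "\<not> ?thesis"
  define E where "E = {a..a+T} \<inter> y -` (- box_open)"
  have E_ne: "E \<noteq> {}" using leaves by (auto simp: E_def)
  have E_closed: "closed E" unfolding E_def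
    by (rule continuous_closed_preimage[OF cy]) (use open_box_open in auto)
  have E_bdd: "bdd_below E" by (auto simp: E_def bdd_below_def)
  define t1 where "t1 = Inf E"
  have t1E: "t1 \<in> E" using closed_contains_Inf[OF E_ne E_bdd E_closed] by (simp add: t1_def)
  have before: "y r \<in> box_open" if "a \<le> r" "r < t1" for r
  proof (rule ccontr)
    assume "y r \<notin> box_open"
    then have "r \<in> E" using that t1E by (auto simp: E_def)
    then have "t1 \<le> r" unfolding t1_def using E_bdd by (rule cInf_lower)
    then show False using that by simp
  qed
  have t1a: "a < t1"
    using t1E start_in_box_inner[OF hS hu hi] box_inner_subset_open
    by (auto simp: E_def order.order_iff_strict)
  have t1T: "t1 \<le> a + T" using t1E by (auto simp: E_def)
  have inner: "y r \<in> box_inner" if r: "a \<le> r" "r < t1" for r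
  proof (rule near_orbit_in_box_inner)
    show "a \<le> r" "r \<le> a + T" using r t1T by auto
    show "continuous_on {a..r} y" using cy by (rule continuous_on_subset) (use r t1T in auto)
    show box: "y r' \<in> box_closed" if "r' \<in> {a..r}" for r'
      using before[of r'] that r box_open_subset_closed by auto
    fix r' assume r': "r' \<in> {a<..<r}"
    have "G r' (y r') = F r' (y r')" using G_eq_F box r' by auto
    then show "(y has_vector_derivative F r' (y r')) (at r')"
      using dy[of r'] r' r t1T by auto
  qed (use hu hi in auto)
  have "{a..<t1} \<subseteq> {a..t1} \<inter> y -` box_inner" using inner by auto
  moreover have "closed ({a..t1} \<inter> y -` box_inner)"
    by (rule continuous_closed_preimage)
      (use cy t1T closed_box_inner in \<open>auto intro: continuous_on_subset\<close>)
  ultimately have "closure {a..<t1} \<subseteq> {a..t1} \<inter> y -` box_inner" by (rule closure_minimal)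
  then have "y t1 \<in> box_inner" using t1a by (auto simp: subset_iff)
  then show False using t1E box_inner_subset_open by (auto simp: E_def)
qed

end

context si_positive_orbit
begin

text \<open>
  Solutions are first constructed for a globally Lipschitz and bounded modification of F,
  obtained by clamping the state into box_closed; they never leave the box, so they solve the
  original system.
\<close>
definition "clamp_box z = (max (1/umax) (min (1/umin) (fst z)), max (-1) (min 1 (snd (z::real\<times>real))))"
definition "F_clamped t z = F t (clamp_box z)"

lemma clamp_box_in: "clamp_box z \<in> box_closed"
proof -
  have "umin \<le> umax" using p_nonneg p_less_1 u0_pos by (simp add: umin_def umax_def)
  then have "1/umax \<le> 1/umin" using umin_pos by (simp add: frac_le)
  then show ?thesis by (auto simp: clamp_box_def box_closed_def)
qed

lemma clamp_box_id: "z \<in> box_closed \<Longrightarrow> clamp_box z = z"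
  by (cases z) (auto simp: clamp_box_def box_closed_def)

lemma F_clamped_eq_F: "z \<in> box_closed \<Longrightarrow> F_clamped t z = F t z"
  by (simp add: F_clamped_def clamp_box_id)

lemma clamp_box_nonexpansive:
  "\<bar>fst (clamp_box z) - fst (clamp_box w)\<bar> \<le> \<bar>fst z - fst w\<bar>"
  "\<bar>snd (clamp_box z) - snd (clamp_box w)\<bar> \<le> \<bar>snd z - snd w\<bar>"
  by (auto simp: clamp_box_def)

definition "L0 = A + 2/umin + 2*bM/umin + 2*bM + c"

lemma L0_pos: "L0 > 0" unfolding L0_def using A_pos umin_pos bM_ge_\<beta>0 \<beta>0_pos c_pos by (simp add: add_pos_nonneg)

lemma F_lipschitz_box_closed:
  assumes z: "z \<in> box_closed" and w: "w \<in> box_closed"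
  shows "norm (F t z - F t w) \<le> L0 * (\<bar>fst z - fst w\<bar> + \<bar>snd z - snd w\<bar>)"
proof -
  obtain S1 I1 S2 I2 where zw: "z = (S1, I1)" "w = (S2, I2)" by (cases z, cases w)
  have S: "0 < S1" "S1 \<le> 1/umin" "0 < S2" "S2 \<le> 1/umin" "\<bar>I2\<bar> \<le> 1"
    using box_closed_bounds(1)[OF z] box_closed_bounds(1)[OF w] z w by (auto simp: zw box_closed_def)
  have bt: "0 \<le> b t" "b t \<le> bM" using b_lower[of t] b_upper[of t] \<beta>0_pos by auto
  define dS where "dS = \<bar>S1 - S2\<bar>"
  define dI where "dI = \<bar>I1 - I2\<bar>"
  have IS: "\<bar>I1*S1 - I2*S2\<bar> \<le> dI/umin + dS"
    using abs_mult_diff_le[of S1 "1/umin" I2 1 I1 S2] S by (simp add: dI_def dS_def)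
  have SS: "\<bar>S1*(A-S1) - S2*(A-S2)\<bar> \<le> dS*(A + 2/umin)"
  proof -
    have "S1*(A-S1) - S2*(A-S2) = (S1 - S2)*(A - S1 - S2)" by (simp add: algebra_simps)
    moreover have "\<bar>A - S1 - S2\<bar> \<le> A + 2/umin" using S A_pos by auto
    ultimately show ?thesis unfolding dS_def by (simp add: abs_mult mult_left_mono)
  qed
  have "norm (F t z - F t w) \<le> \<bar>fst (F t z - F t w)\<bar> + \<bar>snd (F t z - F t w)\<bar>"
    by (rule norm_prod_le_abs_sum)
  also have "\<dots> \<le> (\<bar>S1*(A-S1) - S2*(A-S2)\<bar> + b t * \<bar>I1*S1 - I2*S2\<bar>)
      + (b t * \<bar>I1*S1 - I2*S2\<bar> + c*\<bar>I1 - I2\<bar>)"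
  proof (rule add_mono)
    have "fst (F t z - F t w) = (S1*(A-S1) - S2*(A-S2)) - b t * (I1*S1 - I2*S2)"
      by (simp add: F_eq zw algebra_simps)
    then show "\<bar>fst (F t z - F t w)\<bar> \<le> \<bar>S1*(A-S1) - S2*(A-S2)\<bar> + b t * \<bar>I1*S1 - I2*S2\<bar>"
      using abs_triangle_ineq4[of "S1*(A-S1) - S2*(A-S2)" "b t * (I1*S1 - I2*S2)"] bt
      by (simp add: abs_mult)
    have "snd (F t z - F t w) = b t * (I1*S1 - I2*S2) - c*(I1 - I2)"
      by (simp add: F_eq zw algebra_simps)
    then show "\<bar>snd (F t z - F t w)\<bar> \<le> b t * \<bar>I1*S1 - I2*S2\<bar> + c*\<bar>I1 - I2\<bar>"
      using abs_triangle_ineq4[of "b t * (I1*S1 - I2*S2)" "c*(I1 - I2)"] bt c_pos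
      by (simp add: abs_mult)
  qed
  also have "\<dots> \<le> dS*(A + 2/umin) + bM*(dI/umin + dS) + (bM*(dI/umin + dS) + c*dI)"
    using SS IS bt c_pos unfolding dI_def by (intro add_mono mult_mono) auto
  also have "\<dots> = dS*(A + 2/umin + 2*bM) + dI*(2*bM/umin + c)" by (simp add: algebra_simps)
  also have "\<dots> \<le> dS*L0 + dI*L0"
  proof (rule add_mono)
    have "A + 2/umin + 2*bM \<le> L0" unfolding L0_def using umin_pos bM_ge_\<beta>0 \<beta>0_pos c_pos by simp
    then show "dS*(A + 2/umin + 2*bM) \<le> dS*L0" unfolding dS_def by (rule mult_left_mono) simp
    have "2*bM/umin + c \<le> L0" unfolding L0_def using umin_pos bM_ge_\<beta>0 \<beta>0_pos A_pos by simp
    then show "dI*(2*bM/umin + c) \<le> dI*L0" unfolding dI_def by (rule mult_left_mono) simp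
  qed
  finally show ?thesis by (simp add: zw dS_def dI_def algebra_simps)
qed

lemma F_clamped_lipschitz: "norm (F_clamped t z - F_clamped t w) \<le> (2*L0) * norm (z - w)"
proof -
  have "norm (F_clamped t z - F_clamped t w)
      \<le> L0 * (\<bar>fst (clamp_box z) - fst (clamp_box w)\<bar> + \<bar>snd (clamp_box z) - snd (clamp_box w)\<bar>)"
    unfolding F_clamped_def by (rule F_lipschitz_box_closed[OF clamp_box_in clamp_box_in])
  also have "\<dots> \<le> L0 * (norm (z - w) + norm (z - w))"
    using clamp_box_nonexpansive[of z w] abs_fst_le_norm[of "z - w"] abs_snd_le_norm[of "z - w"] L0_pos
    by (intro mult_left_mono) auto
  finally show ?thesis by simp
qed

lemma F_clamped_bounded: "norm (F_clamped t z) \<le> (1/umin)*(A + 1/umin) + 2*bM/umin + c"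
proof -
  obtain S1 I1 where z: "clamp_box z = (S1, I1)" by (cases "clamp_box z")
  have zb: "(S1, I1) \<in> box_closed" using clamp_box_in[of z] by (simp add: z)
  have S: "0 < S1" "S1 \<le> 1/umin" "\<bar>I1\<bar> \<le> 1"
    using box_closed_bounds(1)[OF zb] zb by (auto simp: box_closed_def)
  have bt: "0 \<le> b t" "b t \<le> bM" using b_lower[of t] b_upper[of t] \<beta>0_pos by auto
  have "norm (F_clamped t z) \<le> \<bar>S1*(A-S1) - b t*I1*S1\<bar> + \<bar>b t*I1*S1 - c*I1\<bar>"
    using norm_prod_le_abs_sum[of "F_clamped t z"] by (simp add: F_clamped_def F_eq z)
  also have "\<dots> \<le> (S1*\<bar>A-S1\<bar> + b t*\<bar>I1\<bar>*S1) + (b t*\<bar>I1\<bar>*S1 + c*\<bar>I1\<bar>)"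
    using S bt c_pos by (intro add_mono) (simp_all add: abs_mult abs_triangle_ineq4 [THEN order_trans])
  also have "\<dots> \<le> ((1/umin)*(A + 1/umin) + bM*1*(1/umin)) + (bM*1*(1/umin) + c*1)"
    using S bt c_pos A_pos umin_pos by (intro add_mono mult_mono) auto
  finally show ?thesis by simp
qed

lemma F_clamped_continuous:
  assumes "continuous_on UNIV x" shows "continuous_on {a..a'} (\<lambda>t. F_clamped t (x t))"
proof -
  have "continuous_on {a..a'} x" using assms by (rule continuous_on_subset) auto
  then show ?thesis unfolding F_clamped_def F_eq clamp_box_def
    by (intro continuous_intros b_cont_on)
qed

lemma period_segment_exists:
  assumes hS: "fst y0 > 0" and hu: "\<bar>1/fst y0 - u0\<bar> \<le> \<delta>0" and hi: "\<bar>snd y0\<bar> \<le> \<eta>0"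
  shows "\<exists>y. continuous_on {a..a+T} y \<and> y a = y0 \<and>
     (\<forall>r\<in>{a<..<a+T}. (y has_vector_derivative F r (y r)) (at r))"
proof -
  interpret ivp: bounded_lipschitz_ivp F_clamped "2*L0" "(1/umin)*(A + 1/umin) + 2*bM/umin + c" a "a+T" y0
    by unfold_locales (use L0_pos T_pos F_clamped_lipschitz F_clamped_bounded F_clamped_continuous in auto)
  obtain y where cy: "continuous_on {a..a+T} y" and ya: "y a = y0"
    and dy: "\<forall>r\<in>{a<..<a+T}. (y has_vector_derivative F_clamped r (y r)) (at r)"
    using ivp.solution_exists by blast
  have "\<forall>r\<in>{a..a+T}. y r \<in> box_open"
    by (rule stays_in_box_open[of F_clamped, OF F_clamped_eq_F cy]) (use dy hS ya hu hi in auto)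
  then have "F_clamped r (y r) = F r (y r)" if "r \<in> {a<..<a+T}" for r
    using that box_open_subset_closed by (intro F_clamped_eq_F) auto
  then show ?thesis using cy ya dy by auto
qed

definition "segment a y0 = (SOME y. continuous_on {a..a+T} y \<and> y a = y0 \<and>
     (\<forall>r\<in>{a<..<a+T}. (y has_vector_derivative F r (y r)) (at r)))"

lemma segment_solves:
  assumes "fst y0 > 0" "\<bar>1/fst y0 - u0\<bar> \<le> \<delta>0" "\<bar>snd y0\<bar> \<le> \<eta>0"
  shows "continuous_on {a..a+T} (segment a y0)" "segment a y0 a = y0"
     "\<And>r. r\<in>{a<..<a+T} \<Longrightarrow> (segment a y0 has_vector_derivative F r (segment a y0 r)) (at r)"
  using someI_ex[OF period_segment_exists[OF assms, of a]] unfolding segment_def by auto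

end

section \<open>Asymptotic stability below the threshold\<close>

text \<open>
  \<beta>0 (A T + ln (1 - p)) - c T = -2 \<mu> is the Floquet exponent of I along the orbit for the
  constant rate \<beta>0; db bounds the excess b - \<beta>0 of the actual rate.
\<close>
locale si_subthreshold = si_positive_orbit +
  fixes \<mu> db :: real
  assumes \<mu>_pos: "\<mu> > 0" and threshold_eq: "\<beta>0*(A*T + ln (1-p)) - c*T = -2*\<mu>"
    and db_bound: "\<And>t. b t - \<beta>0 \<le> db" and db_small: "db*T/umin \<le> \<mu>/2"
begin

text \<open>
  Over one period |1/S - u0| is multiplied by \<theta> (after the impulse) up to an error C2 \<theta> |I|,
  and |I| by at most exp (-\<mu>); the weight KK makes Ly contract by the factor \<rho> < 1.
\<close>
definition "\<theta> = exp (-(A*T))/(1-p)"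
definition "KK = 2*\<theta>*C2/(1-exp (-\<mu>)) + 1"
definition "\<rho> = max \<theta> ((1+exp (-\<mu>))/2)"
definition "r0 = min \<delta>0 (min \<eta>0 (\<mu>*umin*((1-p)*u0)/(2*\<beta>0*(1+C2)*T)))"
definition "Ly z = \<bar>1/fst z - u0\<bar> + KK*\<bar>snd z\<bar>"

lemma \<theta>_bounds: "\<theta> > 0" "\<theta> < 1"
proof -
  show "\<theta> > 0" using p_less_1 by (simp add: \<theta>_def)
  have "exp (-(A*T)) < 1-p" using orbit_pos by (simp add: exp_minus field_simps)
  then show "\<theta> < 1" using p_less_1 by (simp add: \<theta>_def)
qed
lemma exp_neg_\<mu>_bounds: "exp (-\<mu>) < 1" "exp (-\<mu>) > 0" using \<mu>_pos by auto
lemma KK_ge_1: "KK \<ge> 1"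
  using \<theta>_bounds C2_pos exp_neg_\<mu>_bounds by (simp add: KK_def)
lemma \<rho>_bounds: "\<rho> < 1" "\<rho> > 0" using \<theta>_bounds exp_neg_\<mu>_bounds by (auto simp: \<rho>_def)
lemma r0_bounds: "r0 > 0" "r0 \<le> \<delta>0" "r0 \<le> \<eta>0"
  "\<beta>0*(r0 + C2*r0)*T/(umin*((1-p)*u0)) \<le> \<mu>/2"
proof -
  show "r0 > 0" using \<delta>0_pos \<eta>0_pos \<mu>_pos umin_pos p_less_1 u0_pos \<beta>0_pos C2_pos T_pos by (simp add: r0_def)
  show "r0 \<le> \<delta>0" "r0 \<le> \<eta>0" by (auto simp: r0_def)
  have "r0 \<le> \<mu>*umin*((1-p)*u0)/(2*\<beta>0*(1+C2)*T)" by (simp add: r0_def)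
  moreover have pos: "umin*((1-p)*u0) > 0" "2*\<beta>0*(1+C2)*T > 0"
    using umin_pos p_less_1 u0_pos \<beta>0_pos C2_pos T_pos by auto
  ultimately have "r0 * (2*\<beta>0*(1+C2)*T) \<le> \<mu>*umin*((1-p)*u0)"
    by (simp add: pos_le_divide_eq)
  then show "\<beta>0*(r0 + C2*r0)*T/(umin*((1-p)*u0)) \<le> \<mu>/2"
    using pos by (simp add: pos_divide_le_eq algebra_simps)
qed

lemma db_nonneg: "db \<ge> 0" using db_bound[of 0] b_lower[of 0] by simp

lemma Ly_components_le: "\<bar>1/fst z - u0\<bar> \<le> Ly z" "\<bar>snd z\<bar> \<le> Ly z"
proof -
  have "1 * \<bar>snd z\<bar> \<le> KK * \<bar>snd z\<bar>" using KK_ge_1 by (intro mult_right_mono) auto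
  then show "\<bar>1/fst z - u0\<bar> \<le> Ly z" "\<bar>snd z\<bar> \<le> Ly z" by (auto simp: Ly_def)
qed

lemma Ly_small_imp_near_orbit:
  assumes "Ly z \<le> r0"
  shows "\<bar>1/fst z - u0\<bar> \<le> \<delta>0" "\<bar>snd z\<bar> \<le> \<eta>0"
  using Ly_components_le[of z] assms r0_bounds by linarith+

text \<open>The excess of the growth rate of I over its value \<beta>0 S on the orbit.\<close>
definition "excess_rate \<Delta> i = db/umin + \<beta>0*(\<Delta> + C2*i)/(umin*((1-p)*u0))"

lemma excess_rate_small:
  assumes "0 \<le> \<Delta>" "\<Delta> \<le> r0" "0 \<le> i" "i \<le> r0"
  shows "excess_rate \<Delta> i * T \<le> \<mu>"
proof -
  have pos: "umin*((1-p)*u0) > 0" using umin_pos p_less_1 u0_pos by simp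
  have "\<Delta> + C2*i \<le> r0 + C2*r0" using assms C2_pos by (intro add_mono mult_left_mono) auto
  then have "\<beta>0*(\<Delta> + C2*i)*T \<le> \<beta>0*(r0 + C2*r0)*T" using \<beta>0_pos T_pos by simp
  then have "\<beta>0*(\<Delta> + C2*i)*T/(umin*((1-p)*u0)) \<le> \<beta>0*(r0 + C2*r0)*T/(umin*((1-p)*u0))"
    using pos by (intro divide_right_mono) auto
  also have "\<dots> \<le> \<mu>/2" by (rule r0_bounds(4))
  finally have "\<beta>0*(\<Delta> + C2*i)*T/(umin*((1-p)*u0)) \<le> \<mu>/2" .
  moreover have "excess_rate \<Delta> i * T = db*T/umin + \<beta>0*(\<Delta> + C2*i)*T/(umin*((1-p)*u0))"
    by (simp add: excess_rate_def algebra_simps)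
  ultimately show ?thesis using db_small by linarith
qed

lemma growth_rate_le_orbit_rate:
  assumes cy: "continuous_on {a..a+T} y"
    and dy: "\<And>r. r \<in> {a<..<a+T} \<Longrightarrow> (y has_vector_derivative F r (y r)) (at r)"
    and box: "\<And>r. r \<in> {a..a+T} \<Longrightarrow> y r \<in> box_closed"
    and r: "r \<in> {a<..<a+T}"
  shows "b r * fst (y r) - c \<le> \<beta>0 * (1/us (r-a)) - c + excess_rate \<bar>1/fst (y a) - u0\<bar> \<bar>snd (y a)\<bar>"
proof -
  define \<epsilon> where "\<epsilon> = \<bar>1/fst (y a) - u0\<bar> + C2*\<bar>snd (y a)\<bar>"
  have rb: "r \<in> {a..a+T}" using r by auto
  have S_pos: "fst (y r) > 0" and S_le: "fst (y r) \<le> 1/umin" and u_ge: "1/fst (y r) \<ge> umin"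
    using box_closed_bounds(1,3)[OF box[OF rb]] box[OF rb] by (auto simp: box_closed_def)
  have us_r: "us (r-a) \<ge> (1-p)*u0" "us (r-a) > 0" using us_ge us_pos r by auto
  have dev: "\<bar>1/fst (y r) - us (r-a)\<bar> \<le> \<epsilon>"
    unfolding \<epsilon>_def
    by (rule recip_S_deviation[of a r]) (use r cy dy box in \<open>auto intro: continuous_on_subset\<close>)
  have "(b r - \<beta>0) * fst (y r) \<le> db * (1/umin)"
    using db_bound[of r] b_lower[of r] S_pos S_le db_nonneg by (intro mult_mono) auto
  moreover have "fst (y r) - 1/us (r-a) \<le> \<epsilon>/(umin*((1-p)*u0))"
  proof -
    have "fst (y r) - 1/us (r-a) = (us (r-a) - 1/fst (y r)) / ((1/fst (y r)) * us (r-a))"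
      using S_pos us_r by (simp add: field_simps)
    also have "\<dots> \<le> \<epsilon> / ((1/fst (y r)) * us (r-a))"
      using dev S_pos us_r by (intro divide_right_mono) (auto simp: abs_minus_commute abs_le_iff)
    also have "\<dots> \<le> \<epsilon>/(umin*((1-p)*u0))"
      using u_ge us_r umin_pos p_less_1 u0_pos dev S_pos
      by (intro divide_left_mono mult_mono mult_pos_pos) auto
    finally show ?thesis .
  qed
  then have "\<beta>0 * (fst (y r) - 1/us (r-a)) \<le> \<beta>0 * (\<epsilon>/(umin*((1-p)*u0)))"
    using \<beta>0_pos by (intro mult_left_mono) auto
  ultimately show ?thesis by (simp add: excess_rate_def \<epsilon>_def algebra_simps)
qed

lemma I_decays_over_period:
  assumes cy: "continuous_on {a..a+T} y"
    and dy: "\<And>r. r \<in> {a<..<a+T} \<Longrightarrow> (y has_vector_derivative F r (y r)) (at r)"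
    and box: "\<And>r. r \<in> {a..a+T} \<Longrightarrow> y r \<in> box_closed"
    and hu: "\<bar>1/fst (y a) - u0\<bar> \<le> r0" and hi: "\<bar>snd (y a)\<bar> \<le> r0"
  shows "\<bar>snd (y (a+T))\<bar> \<le> exp (-\<mu>) * \<bar>snd (y a)\<bar>"
proof -
  define D where "D = excess_rate \<bar>1/fst (y a) - u0\<bar> \<bar>snd (y a)\<bar>"
  define \<phi> where "\<phi> r = \<beta>0 * Phi a r - c*(r-a) + D*(r-a)" for r
  have aT: "a \<le> a + T" using T_pos by simp
  have rate: "b r * fst (y r) - c \<le> \<beta>0 * (1/us (r-a)) - c + D" if "r \<in> {a<..<a+T}" for r
    unfolding D_def by (rule growth_rate_le_orbit_rate[OF cy dy box that])
  have "\<bar>snd (y (a+T))\<bar> \<le> \<bar>snd (y a)\<bar> * exp (\<phi> (a+T) - \<phi> a)"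
    unfolding \<phi>_def
    by (rule I_upper_comparison[OF aT cy dy, of _ "\<lambda>r. \<beta>0 * (1/us (r-a)) - c + D"])
      (auto intro!: continuous_intros derivative_eq_intros Phi_cont Phi_deriv, use rate in force)
  also have "\<phi> (a+T) - \<phi> a = -2*\<mu> + D*T"
    using Phi_period[of a] threshold_eq by (simp add: \<phi>_def algebra_simps)
  also have "\<bar>snd (y a)\<bar> * exp (-2*\<mu> + D*T) \<le> \<bar>snd (y a)\<bar> * exp (-\<mu>)"
    using excess_rate_small[OF _ hu _ hi] by (intro mult_left_mono) (auto simp: D_def)
  finally show ?thesis by (simp add: mult.commute)
qed

lemma recip_deviation_after_impulse:
  assumes cy: "continuous_on {a..a+T} y"
    and dy: "\<And>r. r \<in> {a<..<a+T} \<Longrightarrow> (y has_vector_derivative F r (y r)) (at r)"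
    and box: "\<And>r. r \<in> {a..a+T} \<Longrightarrow> y r \<in> box_closed"
  shows "fst (si_jump p (y (a+T))) > 0"
    "\<bar>1/fst (si_jump p (y (a+T))) - u0\<bar> \<le> \<theta> * (\<bar>1/fst (y a) - u0\<bar> + C2*\<bar>snd (y a)\<bar>)"
proof -
  have aT: "a \<le> a + T" "a + T \<in> {a..a+T}" using T_pos by auto
  have S_pos: "fst (y (a+T)) > 0" using box_closed_bounds(1)[OF box[OF aT(2)]] .
  have jS: "fst (si_jump p (y (a+T))) = (1-p) * fst (y (a+T))" by (simp add: si_jump_def)
  show "fst (si_jump p (y (a+T))) > 0" using jS S_pos p_less_1 by simp
  have "1/fst (si_jump p (y (a+T))) - u0 = \<theta> * recip_dev y a (a+T)"
    unfolding jS \<theta>_def recip_dev_def using S_pos p_less_1 by (simp add: usT field_simps exp_minus)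
  moreover have "\<bar>recip_dev y a (a+T)\<bar> \<le> \<bar>1/fst (y a) - u0\<bar> + C2*\<bar>snd (y a)\<bar>"
    using recip_dev_variation[OF aT(1) _ cy dy box] recip_dev_start[of y a]
      abs_triangle_ineq[of "recip_dev y a (a+T) - recip_dev y a a" "recip_dev y a a"]
    by simp
  ultimately show "\<bar>1/fst (si_jump p (y (a+T))) - u0\<bar> \<le> \<theta> * (\<bar>1/fst (y a) - u0\<bar> + C2*\<bar>snd (y a)\<bar>)"
    using \<theta>_bounds by (simp add: abs_mult mult_left_mono)
qed

lemma KK_absorbs: "\<theta>*C2 + KK*exp (-\<mu>) \<le> \<rho> * KK"
proof -
  have "KK * (1 - exp (-\<mu>)) = 2*\<theta>*C2 + (1 - exp (-\<mu>))"
    using exp_neg_\<mu>_bounds by (simp add: KK_def field_simps)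
  then have "2*\<theta>*C2 \<le> KK * (1 - exp (-\<mu>))" using exp_neg_\<mu>_bounds by simp
  then have "\<theta>*C2 + KK*exp (-\<mu>) \<le> KK * ((1+exp (-\<mu>))/2)" by (simp add: algebra_simps)
  also have "\<dots> \<le> KK * \<rho>" using KK_ge_1 by (intro mult_left_mono) (auto simp: \<rho>_def)
  finally show ?thesis by (simp add: mult.commute)
qed

lemma period_map_contracts:
  assumes cy: "continuous_on {a..a+T} y"
    and dy: "\<And>r. r \<in> {a<..<a+T} \<Longrightarrow> (y has_vector_derivative F r (y r)) (at r)"
    and hS: "fst (y a) > 0" and hL: "Ly (y a) \<le> r0"
  shows "fst (si_jump p (y (a+T))) > 0" "Ly (si_jump p (y (a+T))) \<le> \<rho> * Ly (y a)"
proof -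
  define \<Delta> where "\<Delta> = \<bar>1/fst (y a) - u0\<bar>"
  define i where "i = \<bar>snd (y a)\<bar>"
  have near: "\<Delta> \<le> r0" "i \<le> r0" using Ly_components_le[of "y a"] hL by (auto simp: \<Delta>_def i_def)
  have box: "y r \<in> box_closed" if "r \<in> {a..a+T}" for r
    using stays_in_box_open[of F, OF _ cy dy hS] Ly_small_imp_near_orbit[OF hL] that
      box_open_subset_closed by auto
  show "fst (si_jump p (y (a+T))) > 0" by (rule recip_deviation_after_impulse(1)[OF cy dy box])
  have "\<bar>snd (si_jump p (y (a+T)))\<bar> \<le> exp (-\<mu>) * i"
    using I_decays_over_period[OF cy dy box] near by (simp add: si_jump_def \<Delta>_def i_def)
  then have "Ly (si_jump p (y (a+T))) \<le> \<theta> * (\<Delta> + C2*i) + KK * (exp (-\<mu>) * i)"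
    unfolding Ly_def using recip_deviation_after_impulse(2)[OF cy dy box] KK_ge_1
    by (intro add_mono mult_left_mono) (auto simp: \<Delta>_def i_def)
  also have "\<dots> = \<theta> * \<Delta> + (\<theta>*C2 + KK*exp (-\<mu>)) * i" by (simp add: algebra_simps)
  also have "\<dots> \<le> \<rho> * \<Delta> + (\<rho> * KK) * i"
    using KK_absorbs by (intro add_mono mult_right_mono) (auto simp: \<rho>_def \<Delta>_def i_def)
  finally show "Ly (si_jump p (y (a+T))) \<le> \<rho> * Ly (y a)"
    by (simp add: Ly_def \<Delta>_def i_def algebra_simps)
qed

lemma Ly_decays:
  assumes sol: "impulsive_solution F (si_jump p) T x" and h0: "fst (x 0) > 0" "Ly (x 0) \<le> r0"
  shows "fst (x (real k*T)) > 0 \<and> Ly (x (real k*T)) \<le> \<rho>^k * Ly (x 0)"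
proof (induction k)
  case 0 then show ?case using h0 by simp
next
  case (Suc k)
  obtain L where cont: "continuous_on {real k*T..real k*T+T} (x(real k*T+T:=L))"
    and d: "\<And>r. r \<in> {real k*T<..<real k*T+T} \<Longrightarrow>
      ((x(real k*T+T:=L)) has_vector_derivative F r ((x(real k*T+T:=L)) r)) (at r)"
    and start: "(x(real k*T+T:=L)) (real k*T) = x (real k*T)"
    and final: "(x(real k*T+T:=L)) (real k*T+T) = L"
    and j: "x (real (Suc k)*T) = si_jump p L"
    using impulsive_solution_period[OF sol] by blast
  have "\<rho>^k * Ly (x 0) \<le> 1 * r0"
    using \<rho>_bounds h0 KK_ge_1 by (intro mult_mono) (auto simp: power_le_one Ly_def)
  then have "Ly (x (real k*T)) \<le> r0" using Suc by simp
  then have step: "fst (si_jump p L) > 0" "Ly (si_jump p L) \<le> \<rho> * Ly (x (real k*T))"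
    using period_map_contracts[OF cont d] start final Suc by auto
  have "\<rho> * Ly (x (real k*T)) \<le> \<rho> * (\<rho>^k * Ly (x 0))" using Suc \<rho>_bounds by (intro mult_left_mono) auto
  then show ?case using step j by simp
qed

lemma impulsive_solution_exists:
  assumes h0: "fst y0 > 0" "Ly y0 \<le> r0"
  shows "\<exists>x. impulsive_solution F (si_jump p) T x \<and> x 0 = y0"
proof -
  define v where "v = rec_nat y0 (\<lambda>n w. si_jump p (segment (real n*T) w (real n*T+T)))"
  have v0: "v 0 = y0" and vS: "v (Suc n) = si_jump p (segment (real n*T) (v n) (real n*T+T))" for n
    by (simp_all add: v_def)
  have inv: "fst (v n) > 0 \<and> Ly (v n) \<le> r0" for n
  proof (induction n)
    case 0 then show ?case using h0 v0 by simp
  next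
    case (Suc n)
    note seg = segment_solves[OF conjunct1[OF Suc] Ly_small_imp_near_orbit[OF conjunct2[OF Suc]], where a="real n*T"]
    have "fst (v (Suc n)) > 0" "Ly (v (Suc n)) \<le> \<rho> * Ly (v n)"
      using period_map_contracts[OF seg(1,3)] Suc by (auto simp: seg(2) vS)
    moreover have "\<rho> * Ly (v n) \<le> 1 * r0" using \<rho>_bounds Suc KK_ge_1 by (intro mult_mono) (auto simp: Ly_def)
    ultimately show ?case by simp
  qed
  note seg = segment_solves[OF conjunct1[OF inv] Ly_small_imp_near_orbit[OF conjunct2[OF inv]]]
  have jump: "segment (real (Suc n)*T) (v (Suc n)) (real (Suc n)*T)
      = si_jump p (segment (real n*T) (v n) (real n*T+T))" for n
  proof -
    have "segment (real (Suc n)*T) (v (Suc n)) (real (Suc n)*T) = v (Suc n)" by (rule seg(2))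
    then show ?thesis by (simp only: vS)
  qed
  have "impulsive_solution F (si_jump p) T (\<lambda>t. segment (real (nat \<lfloor>t/T\<rfloor>)*T) (v (nat \<lfloor>t/T\<rfloor>)) t)"
    by (rule impulsive_solution_glue[where z="\<lambda>n. segment (real n*T) (v n)", OF T_pos seg(1) seg(3) jump])
  moreover have "segment (real (nat \<lfloor>0/T\<rfloor>)*T) (v (nat \<lfloor>0/T\<rfloor>)) 0 = y0"
    using seg(2)[of 0 0] v0 by simp
  ultimately show ?thesis by blast
qed

lemma Ly_small_imp_close:
  assumes e: "\<epsilon> > 0"
  shows "\<exists>r>0. r \<le> r0 \<and> (\<forall>z. fst z > 0 \<and> Ly z < r \<longrightarrow> dist z (1/u0, 0) < \<epsilon>)"
proof -
  define r where "r = min r0 (min (u0/2) (min (\<epsilon>*u0^2/4) (\<epsilon>/2)))"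
  have r: "r > 0" "r \<le> r0" "r \<le> u0/2" "r \<le> \<epsilon>*u0^2/4" "r \<le> \<epsilon>/2"
    using r0_bounds u0_pos e by (auto simp: r_def)
  have "dist z (1/u0, 0) < \<epsilon>" if z: "fst z > 0" "Ly z < r" for z
  proof -
    have h1: "\<bar>1/fst z - u0\<bar> < r" and h2: "\<bar>snd z\<bar> < r"
      using z Ly_components_le[of z] by linarith+
    have iS: "1/fst z > u0/2" using h1 r by (auto simp: abs_less_iff)
    have "fst z - 1/u0 = (u0 - 1/fst z)/((1/fst z)*u0)" using z u0_pos by (simp add: field_simps)
    then have "\<bar>fst z - 1/u0\<bar> = \<bar>1/fst z - u0\<bar>/((1/fst z)*u0)"
      using z u0_pos by (simp add: abs_minus_commute abs_mult)
    also have "\<dots> \<le> r/((u0/2)*u0)"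
    proof (rule frac_le)
      show "(u0/2)*u0 \<le> (1/fst z)*u0" using iS u0_pos by (intro mult_right_mono) auto
    qed (use h1 r u0_pos in auto)
    also have "\<dots> \<le> \<epsilon>/2" using r(4) u0_pos by (simp add: field_simps power2_eq_square)
    finally have "\<bar>fst z - 1/u0\<bar> \<le> \<epsilon>/2" .
    moreover have "dist z (1/u0, 0) \<le> \<bar>fst z - 1/u0\<bar> + \<bar>snd z\<bar>"
      using norm_prod_le_abs_sum[of "z - (1/u0, 0)"] by (simp add: dist_norm)
    ultimately show ?thesis using h2 r by linarith
  qed
  then show ?thesis using r by blast
qed

lemma open_Ly_sublevel: "open {z. fst z > 0 \<and> Ly z < r}"
proof -
  have "continuous_on {z::real\<times>real. 0 < fst z} Ly"
    unfolding Ly_def by (intro continuous_intros) auto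
  then have "open ({z::real\<times>real. 0 < fst z} \<inter> Ly -` {..<r})"
  proof (rule continuous_open_preimage)
    show "open {z::real\<times>real. 0 < fst z}" by (intro open_Collect_less continuous_intros)
  qed auto
  moreover have "{z. fst z > 0 \<and> Ly z < r} = {z::real\<times>real. 0 < fst z} \<inter> Ly -` {..<r}" by auto
  ultimately show ?thesis by simp
qed

lemma Ly_orbit: "Ly (1/u0, 0) = 0" using u0_pos by (simp add: Ly_def)

lemma orbit_stable:
  assumes V: "open V" "(1/u0, 0) \<in> V"
  shows "\<exists>W. open W \<and> (1/u0, 0) \<in> W \<and> W \<subseteq> V \<and>
           (\<forall>y0\<in>W. (\<exists>x. impulsive_solution F (si_jump p) T x \<and> x 0 = y0) \<and>
              (\<forall>x. impulsive_solution F (si_jump p) T x \<and> x 0 = y0 \<longrightarrow> (\<forall>k::nat. x (real k * T) \<in> V)))"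
proof -
  obtain \<epsilon> where e: "\<epsilon> > 0" "ball (1/u0, 0) \<epsilon> \<subseteq> V" using V open_contains_ball by blast
  obtain r where r: "r > 0" "r \<le> r0" "\<And>z. fst z > 0 \<and> Ly z < r \<Longrightarrow> dist z (1/u0, 0) < \<epsilon>"
    using Ly_small_imp_close[OF e(1)] by blast
  have "x (real k*T) \<in> V"
    if x: "impulsive_solution F (si_jump p) T x" "fst (x 0) > 0" "Ly (x 0) < r" for x k
  proof -
    have d: "fst (x (real k*T)) > 0 \<and> Ly (x (real k*T)) \<le> \<rho>^k * Ly (x 0)"
      using Ly_decays[of x k] x r by auto
    have "\<rho>^k * Ly (x 0) \<le> 1 * Ly (x 0)"
      using \<rho>_bounds KK_ge_1 by (intro mult_right_mono) (auto simp: power_le_one Ly_def)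
    then have "Ly (x (real k*T)) < r" using d x by auto
    then have "dist (x (real k*T)) (1/u0, 0) < \<epsilon>" using r(3) d by blast
    then show ?thesis using e(2) by (auto simp: dist_commute)
  qed
  moreover have "{z. fst z > 0 \<and> Ly z < r} \<subseteq> V" using r(3) e(2) by (auto simp: dist_commute)
  ultimately show ?thesis
    using open_Ly_sublevel[of r] impulsive_solution_exists r u0_pos Ly_orbit
    by (intro exI[of _ "{z. fst z > 0 \<and> Ly z < r}"]) auto
qed

lemma orbit_attractive:
  assumes y0: "fst y0 > 0" "Ly y0 < r0"
    and x: "impulsive_solution F (si_jump p) T x" "x 0 = y0"
  shows "(\<lambda>k::nat. x (real k * T)) \<longlonglongrightarrow> (1/u0, 0)"
proof (rule tendstoI)
  fix \<epsilon> :: real assume e: "\<epsilon> > 0"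
  obtain r where r: "r > 0" "\<And>z. fst z > 0 \<and> Ly z < r \<Longrightarrow> dist z (1/u0, 0) < \<epsilon>"
    using Ly_small_imp_close[OF e] by blast
  have d: "fst (x (real k*T)) > 0 \<and> Ly (x (real k*T)) \<le> \<rho>^k * Ly (x 0)" for k
    using Ly_decays[of x k] x y0 by auto
  have "(\<lambda>k. \<rho>^k * Ly (x 0)) \<longlonglongrightarrow> 0"
    using \<rho>_bounds by (intro tendsto_mult_left_zero LIMSEQ_power_zero) auto
  then have "\<forall>\<^sub>F k in sequentially. \<rho>^k * Ly (x 0) < r" using r(1) by (rule order_tendstoD(2))
  then show "\<forall>\<^sub>F k in sequentially. dist (x (real k*T)) (1/u0, 0) < \<epsilon>"
    by eventually_elim (use d r(2) in \<open>meson le_less_trans\<close>)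
qed

theorem orbit_asymp_stable: "asymp_stable_periodic F (si_jump p) T (1/u0, 0)"
  unfolding asymp_stable_periodic_def
proof (intro conjI allI impI)
  show "\<exists>V. open V \<and> (1/u0, 0) \<in> V \<and>
        (\<forall>y0\<in>V. (\<exists>x. impulsive_solution F (si_jump p) T x \<and> x 0 = y0) \<and>
           (\<forall>x. impulsive_solution F (si_jump p) T x \<and> x 0 = y0 \<longrightarrow>
               (\<lambda>k::nat. x (real k * T)) \<longlonglongrightarrow> (1/u0, 0)))"
    using open_Ly_sublevel[of r0] impulsive_solution_exists orbit_attractive u0_pos r0_bounds Ly_orbit
    by (intro exI[of _ "{z. fst z > 0 \<and> Ly z < r0}"]) auto
qed (use orbit_stable in auto)

end

section \<open>Instability at or above the threshold\<close>

locale si_superthreshold = si_positive_orbit +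
  assumes threshold_nonneg: "\<beta>0*(A*T + ln (1-p)) - c*T \<ge> 0"
begin

text \<open>
  A solution starting on the orbit's S-value with a small negative I keeps I < 0 and 1/S below
  the orbit; then S exceeds the orbit value by an amount proportional to |I| and time, and the
  resulting excess growth rate makes |I| grow by the factor exp (lam0 |I|) per period.
\<close>
definition "lam0 = \<beta>0 * exp (-(A*T)) * (\<beta>0 * exp (-(M1*T)) * umin) * T^2 / (2*u0*umax)"

lemma lam0_pos: "lam0 > 0" using \<beta>0_pos umin_pos u0_pos umax_pos T_pos by (simp add: lam0_def)

lemma I_negative_bounded_below:
  assumes cy: "continuous_on {a..a+T} y"
    and dy: "\<And>r. r \<in> {a<..<a+T} \<Longrightarrow> (y has_vector_derivative F r (y r)) (at r)"
    and box: "\<And>r. r \<in> {a..a+T} \<Longrightarrow> y r \<in> box_closed"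
    and I_neg: "snd (y a) < 0" and r: "r \<in> {a..a+T}"
  shows "\<bar>snd (y a)\<bar> * exp (-(M1*T)) \<le> \<bar>snd (y r)\<bar>" "snd (y r) < 0"
proof -
  have lower: "\<bar>snd (y a)\<bar> * exp (-(M1*T)) \<le> \<bar>snd (y s)\<bar>" if s: "s \<in> {a..a+T}" for s
  proof -
    have "\<bar>snd (y a)\<bar> * exp (-(M1*T)) \<le> \<bar>snd (y a)\<bar> * exp (-(M1*(s-a)))"
      using s M1_pos by (intro mult_left_mono) auto
    also have "\<dots> \<le> \<bar>snd (y s)\<bar>"
      by (rule I_exp_bounds(2)) (use s cy dy box in \<open>auto intro: continuous_on_subset\<close>)
    finally show ?thesis .
  qed
  then show "\<bar>snd (y a)\<bar> * exp (-(M1*T)) \<le> \<bar>snd (y r)\<bar>" using r .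
  show "snd (y r) < 0"
  proof (rule ccontr)
    assume "\<not> snd (y r) < 0"
    moreover have "continuous_on {a..r} (\<lambda>r. snd (y r))"
      using r cy by (intro continuous_intros) (auto intro: continuous_on_subset)
    ultimately obtain s where "a \<le> s" "s \<le> r" "snd (y s) = 0"
      using IVT'[of "\<lambda>r. snd (y r)" a 0 r] I_neg r by auto
    moreover have "\<bar>snd (y a)\<bar> * exp (-(M1*T)) > 0" using I_neg by (intro mult_pos_pos) auto
    ultimately show False using lower[of s] r by auto
  qed
qed

lemma recip_dev_decreases:
  assumes cy: "continuous_on {a..a+T} y"
    and dy: "\<And>r. r \<in> {a<..<a+T} \<Longrightarrow> (y has_vector_derivative F r (y r)) (at r)"
    and box: "\<And>r. r \<in> {a..a+T} \<Longrightarrow> y r \<in> box_closed"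
    and hu: "1/fst (y a) \<le> u0" and I_neg: "snd (y a) < 0" and r: "r \<in> {a..a+T}"
  shows "recip_dev y a r + \<beta>0 * (\<bar>snd (y a)\<bar> * exp (-(M1*T))) * umin * (r - a) \<le> 0"
proof -
  define \<kappa> where "\<kappa> = \<beta>0 * (\<bar>snd (y a)\<bar> * exp (-(M1*T))) * umin"
  have aT: "a \<le> a + T" and r1: "a \<le> r" "r \<le> a+T" using T_pos r by auto
  have S_pos: "fst (y s) > 0" if "s \<in> {a..a+T}" for s using box_closed_bounds(1)[OF box[OF that]] .
  have "recip_dev y a r + \<kappa> * (r - a) \<le> recip_dev y a a + \<kappa> * (a - a)"
  proof (rule DERIV_nonpos_imp_le_Icc[OF r1(1), of _ "\<lambda>s. exp (A*(s-a)) * (b s * snd (y s) / fst (y s)) + \<kappa>"])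
    show "continuous_on {a..r} (\<lambda>s. recip_dev y a s + \<kappa> * (s - a))"
      unfolding recip_dev_def us_def using cy S_pos A_pos Ke_pos r1
      by (intro continuous_intros) (auto intro: continuous_on_subset, fastforce)
    fix s assume s: "a < s" "s < r"
    then have sI: "s \<in> {a<..<a+T}" and sb: "s \<in> {a..a+T}" using r1 by auto
    show "((\<lambda>s. recip_dev y a s + \<kappa> * (s - a)) has_real_derivative
        exp (A*(s-a)) * (b s * snd (y s) / fst (y s)) + \<kappa>) (at s)"
      using recip_dev_deriv[OF aT cy dy sI] S_pos[OF sb] by (auto intro!: derivative_eq_intros)
    have "\<kappa> = 1 * (\<beta>0 * (\<bar>snd (y a)\<bar> * exp (-(M1*T))) * umin)" by (simp add: \<kappa>_def)
    also have "\<dots> \<le> exp (A*(s-a)) * (b s * \<bar>snd (y s)\<bar> * (1/fst (y s)))"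
      using s A_pos b_lower[of s] \<beta>0_pos I_negative_bounded_below(1)[OF cy dy box I_neg sb]
        box_closed_bounds(3)[OF box[OF sb]] umin_pos
      by (intro mult_mono) auto
    also have "\<dots> = - (exp (A*(s-a)) * (b s * snd (y s) / fst (y s)))"
      using I_negative_bounded_below(2)[OF cy dy box I_neg sb] by simp
    finally show "exp (A*(s-a)) * (b s * snd (y s) / fst (y s)) + \<kappa> \<le> 0" by simp
  qed
  moreover have "recip_dev y a a \<le> 0" using hu by (simp add: recip_dev_start)
  ultimately show ?thesis unfolding \<kappa>_def[symmetric] by simp
qed

lemma growth_rate_ge_orbit_rate:
  assumes cy: "continuous_on {a..a+T} y"
    and dy: "\<And>r. r \<in> {a<..<a+T} \<Longrightarrow> (y has_vector_derivative F r (y r)) (at r)"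
    and box: "\<And>r. r \<in> {a..a+T} \<Longrightarrow> y r \<in> box_closed"
    and hu: "1/fst (y a) \<le> u0" and I_neg: "snd (y a) < 0" and r: "r \<in> {a<..<a+T}"
  shows "\<beta>0 * (1/us (r-a)) - c + 2*(lam0 * \<bar>snd (y a)\<bar> / T^2)*(r-a) \<le> b r * fst (y r) - c"
proof -
  define \<kappa> where "\<kappa> = \<beta>0 * (\<bar>snd (y a)\<bar> * exp (-(M1*T))) * umin"
  have \<kappa>_pos: "\<kappa> > 0" unfolding \<kappa>_def using \<beta>0_pos I_neg umin_pos by (intro mult_pos_pos) auto
  have rb: "r \<in> {a..a+T}" using r by auto
  have S_pos: "fst (y r) > 0" and u_le: "1/fst (y r) \<le> umax"
    using box_closed_bounds(1,2)[OF box[OF rb]] by auto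
  have us_r: "us (r-a) \<le> u0" "us (r-a) > 0" using us_le us_pos r by auto
  have "A*(r-a) \<le> A*T" using r A_pos by (intro mult_left_mono) auto
  then have "exp (-(A*T)) * (\<kappa> * (r-a)) \<le> exp (-(A*(r-a))) * (\<kappa> * (r-a))"
    using r \<kappa>_pos by (intro mult_right_mono) auto
  also have "\<dots> \<le> us (r-a) - 1/fst (y r)"
  proof -
    have "\<kappa>*(r-a) \<le> exp (A*(r-a)) * (us (r-a) - 1/fst (y r))"
      using recip_dev_decreases[OF cy dy box hu I_neg rb]
      by (simp add: recip_dev_def \<kappa>_def algebra_simps)
    then have "exp (-(A*(r-a))) * (\<kappa>*(r-a))
        \<le> exp (-(A*(r-a))) * (exp (A*(r-a)) * (us (r-a) - 1/fst (y r)))"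
      by (intro mult_left_mono) auto
    then show ?thesis by (simp add: mult.assoc[symmetric] flip: exp_add)
  qed
  finally have gap: "exp (-(A*T)) * \<kappa> * (r-a) \<le> us (r-a) - 1/fst (y r)" by (simp add: mult.assoc)
  have "(exp (-(A*T)) * \<kappa> * (r-a)) / (umax * u0)
      \<le> (us (r-a) - 1/fst (y r)) / ((1/fst (y r)) * us (r-a))"
  proof (rule frac_le)
    have "0 \<le> exp (-(A*T)) * \<kappa> * (r-a)" using \<kappa>_pos r by simp
    then show "0 \<le> us (r-a) - 1/fst (y r)" using gap by linarith
    show "0 < 1/fst (y r) * us (r-a)" using S_pos us_r by simp
    show "1/fst (y r) * us (r-a) \<le> umax * u0" using u_le us_r S_pos umax_pos by (intro mult_mono) auto
  qed (use gap in auto)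
  also have "\<dots> = fst (y r) - 1/us (r-a)" using S_pos us_r by (simp add: field_simps)
  finally have "\<beta>0 * ((exp (-(A*T)) * \<kappa> * (r-a)) / (umax * u0)) \<le> \<beta>0 * (fst (y r) - 1/us (r-a))"
    using \<beta>0_pos by (intro mult_left_mono) auto
  moreover have "\<beta>0 * fst (y r) \<le> b r * fst (y r)" using b_lower[of r] S_pos by (intro mult_right_mono) auto
  moreover have "\<beta>0 * ((exp (-(A*T)) * \<kappa> * (r-a)) / (umax * u0)) = 2*(lam0 * \<bar>snd (y a)\<bar> / T^2)*(r-a)"
    using T_pos by (simp add: lam0_def \<kappa>_def field_simps)
  ultimately show ?thesis by (simp add: algebra_simps)
qed

lemma period_map_expands:
  assumes cy: "continuous_on {a..a+T} y"
    and dy: "\<And>r. r \<in> {a<..<a+T} \<Longrightarrow> (y has_vector_derivative F r (y r)) (at r)"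
    and hS: "fst (y a) > 0" and hu: "1/fst (y a) \<le> u0" and hu2: "\<bar>1/fst (y a) - u0\<bar> \<le> \<delta>0"
    and I_neg: "snd (y a) < 0" and hi: "\<bar>snd (y a)\<bar> \<le> \<eta>0"
  shows "fst (si_jump p (y (a+T))) > 0" "1/fst (si_jump p (y (a+T))) \<le> u0"
    "snd (si_jump p (y (a+T))) < 0"
    "\<bar>snd (y a)\<bar> * exp (lam0 * \<bar>snd (y a)\<bar>) \<le> \<bar>snd (si_jump p (y (a+T)))\<bar>"
proof -
  define i where "i = \<bar>snd (y a)\<bar>"
  define lam where "lam = lam0 * i / T^2"
  define \<phi> where "\<phi> r = \<beta>0 * Phi a r - c*(r-a) + lam*(r-a)^2" for r
  have box: "y r \<in> box_closed" if "r \<in> {a..a+T}" for r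
    using stays_in_box_open[of F, OF _ cy dy hS hu2 hi] that box_open_subset_closed by auto
  have aT: "a \<le> a + T" "a + T \<in> {a..a+T}" using T_pos by auto
  have S_pos: "fst (y (a+T)) > 0" using box_closed_bounds(1)[OF box[OF aT(2)]] .
  have "\<bar>snd (y a)\<bar> * exp (\<phi> (a+T) - \<phi> a) \<le> \<bar>snd (y (a+T))\<bar>"
    unfolding \<phi>_def
    by (rule I_lower_comparison[OF aT(1) cy dy, of _ "\<lambda>r. \<beta>0 * (1/us (r-a)) - c + 2*lam*(r-a)"])
      (auto intro!: continuous_intros derivative_eq_intros Phi_cont Phi_deriv,
        use growth_rate_ge_orbit_rate[OF cy dy box hu I_neg] in \<open>force simp: lam_def i_def\<close>)
  moreover have "\<phi> (a+T) - \<phi> a = \<beta>0*(A*T + ln (1-p)) - c*T + lam0 * i"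
    using Phi_period[of a] T_pos by (simp add: \<phi>_def lam_def algebra_simps power2_eq_square)
  then have "i * exp (lam0 * i) \<le> i * exp (\<phi> (a+T) - \<phi> a)"
    using threshold_nonneg by (intro mult_left_mono) (auto simp: i_def)
  ultimately have "i * exp (lam0 * i) \<le> \<bar>snd (y (a+T))\<bar>" by (simp add: i_def)
  then show "\<bar>snd (y a)\<bar> * exp (lam0 * \<bar>snd (y a)\<bar>) \<le> \<bar>snd (si_jump p (y (a+T)))\<bar>"
    by (simp add: si_jump_def i_def)
  show "fst (si_jump p (y (a+T))) > 0" using S_pos p_less_1 by (simp add: si_jump_def)
  show "snd (si_jump p (y (a+T))) < 0"
    using I_negative_bounded_below(2)[OF cy dy box I_neg aT(2)] by (simp add: si_jump_def)
  have "0 \<le> \<beta>0 * (\<bar>snd (y a)\<bar> * exp (-(M1*T))) * umin * (a + T - a)"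
    using \<beta>0_pos umin_pos T_pos by simp
  then have "recip_dev y a (a+T) \<le> 0"
    using recip_dev_decreases[OF cy dy box hu I_neg aT(2)] by linarith
  then have "1/fst (y (a+T)) \<le> (1-p)*u0" by (simp add: recip_dev_def usT mult_le_0_iff)
  then show "1/fst (si_jump p (y (a+T))) \<le> u0"
    using S_pos p_less_1 by (simp add: si_jump_def field_simps)
qed

lemma ball_near_orbit:
  obtains \<epsilon> where "\<epsilon> > 0" "\<epsilon> \<le> \<eta>0"
    "\<And>z. z \<in> ball (1/u0, 0::real) \<epsilon> \<Longrightarrow> fst z > 0 \<and> \<bar>1/fst z - u0\<bar> \<le> \<delta>0 \<and> \<bar>snd z\<bar> \<le> \<eta>0"
proof
  define \<epsilon> where "\<epsilon> = min (1/(2*u0)) (min (\<delta>0/(2*u0^2)) \<eta>0)"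
  show \<epsilon>: "\<epsilon> > 0" "\<epsilon> \<le> \<eta>0" using u0_pos \<delta>0_pos \<eta>0_pos by (auto simp: \<epsilon>_def)
  fix z assume z: "z \<in> ball (1/u0, 0::real) \<epsilon>"
  have d: "norm (z - (1/u0, 0)) < \<epsilon>" using z by (simp add: dist_norm norm_minus_commute)
  have h1: "\<bar>fst z - 1/u0\<bar> < \<epsilon>" using abs_fst_le_norm[of "z - (1/u0, 0)"] d by simp
  have h2: "\<bar>snd z\<bar> < \<epsilon>" using abs_snd_le_norm[of "z - (1/u0, 0)"] d by simp
  have "1/u0 - 1/(2*u0) = 1/(2*u0)" by (simp add: field_simps)
  then have S_ge: "fst z > 1/(2*u0)" using h1 by (auto simp: abs_less_iff \<epsilon>_def)
  moreover have "1/(2*u0) > 0" using u0_pos by simp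
  ultimately have S_pos: "fst z > 0" by linarith
  have "\<bar>1/fst z - u0\<bar> = \<bar>fst z - 1/u0\<bar> * (u0 / fst z)"
    using S_pos u0_pos by (simp add: abs_mult abs_minus_commute field_simps)
  also have "\<dots> \<le> \<epsilon> * (2*u0^2)"
  proof (rule mult_mono)
    have "u0 / fst z \<le> u0 / (1/(2*u0))" using S_ge u0_pos S_pos by (intro divide_left_mono) auto
    then show "u0 / fst z \<le> 2*u0^2" using u0_pos by (simp add: power2_eq_square)
  qed (use h1 S_pos u0_pos in auto)
  also have "\<dots> \<le> \<delta>0"
  proof -
    have "\<epsilon> \<le> \<delta>0/(2*u0^2)" by (simp add: \<epsilon>_def)
    then show ?thesis using u0_pos by (simp add: field_simps)
  qed
  finally show "fst z > 0 \<and> \<bar>1/fst z - u0\<bar> \<le> \<delta>0 \<and> \<bar>snd z\<bar> \<le> \<eta>0"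
    using S_pos h2 \<epsilon> by simp
qed

lemma I_grows_while_near_orbit:
  assumes sol: "impulsive_solution F (si_jump p) T x" and x0: "x 0 = (1/u0, -\<eta>)" and \<eta>: "\<eta> > 0"
    and near: "\<And>k. fst (x (real k*T)) > 0 \<and> \<bar>1/fst (x (real k*T)) - u0\<bar> \<le> \<delta>0 \<and> \<bar>snd (x (real k*T))\<bar> \<le> \<eta>0"
  shows "1/fst (x (real k*T)) \<le> u0 \<and> snd (x (real k*T)) < 0 \<and>
      \<eta> + real k * (lam0 * \<eta>^2) \<le> \<bar>snd (x (real k*T))\<bar>"
proof (induction k)
  case 0 then show ?case using x0 u0_pos \<eta> by simp
next
  case (Suc k)
  obtain L where cont: "continuous_on {real k*T..real k*T+T} (x(real k*T+T:=L))"
    and d: "\<And>r. r \<in> {real k*T<..<real k*T+T} \<Longrightarrow>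
      ((x(real k*T+T:=L)) has_vector_derivative F r ((x(real k*T+T:=L)) r)) (at r)"
    and start: "(x(real k*T+T:=L)) (real k*T) = x (real k*T)"
    and final: "(x(real k*T+T:=L)) (real k*T+T) = L"
    and j: "x (real (Suc k)*T) = si_jump p L"
    using impulsive_solution_period[OF sol] by blast
  define I where "I = \<bar>snd (x (real k*T))\<bar>"
  have step: "1/fst (si_jump p L) \<le> u0" "snd (si_jump p L) < 0" "I * exp (lam0 * I) \<le> \<bar>snd (si_jump p L)\<bar>"
    using period_map_expands[OF cont d] start final Suc near[of k] by (auto simp: I_def)
  have I_ge: "\<eta> + real k * (lam0 * \<eta>^2) \<le> I" using Suc.IH unfolding I_def by blast
  moreover have "0 \<le> real k * (lam0 * \<eta>^2)" using lam0_pos by simp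
  ultimately have \<eta>_le: "\<eta> \<le> I" by linarith
  have "\<eta>^2 \<le> I^2" using \<eta>_le \<eta> by (intro power_mono) auto
  then have "I + lam0 * \<eta>^2 \<le> I * (1 + lam0 * I)"
    using lam0_pos by (simp add: algebra_simps power2_eq_square)
  also have "\<dots> \<le> I * exp (lam0 * I)" using \<eta>_le \<eta> by (intro mult_left_mono) auto
  finally have "\<eta> + real (Suc k) * (lam0 * \<eta>^2) \<le> \<bar>snd (si_jump p L)\<bar>"
    using I_ge step(3) by (simp add: algebra_simps)
  then show ?case using step j by simp
qed

theorem orbit_not_asymp_stable: "\<not> asymp_stable_periodic F (si_jump p) T (1/u0, 0)"
proof
  assume stable: "asymp_stable_periodic F (si_jump p) T (1/u0, 0)"
  obtain \<epsilon> where \<epsilon>: "\<epsilon> > 0" "\<epsilon> \<le> \<eta>0"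
    and near: "\<And>z. z \<in> ball (1/u0, 0::real) \<epsilon> \<Longrightarrow> fst z > 0 \<and> \<bar>1/fst z - u0\<bar> \<le> \<delta>0 \<and> \<bar>snd z\<bar> \<le> \<eta>0"
    using ball_near_orbit by blast
  obtain W where W: "open W" "(1/u0, 0) \<in> W"
    and W_stays: "\<And>y0. y0 \<in> W \<Longrightarrow> (\<exists>x. impulsive_solution F (si_jump p) T x \<and> x 0 = y0) \<and>
      (\<forall>x. impulsive_solution F (si_jump p) T x \<and> x 0 = y0 \<longrightarrow> (\<forall>k::nat. x (real k * T) \<in> ball (1/u0, 0::real) \<epsilon>))"
  proof -
    have "open (ball (1/u0, 0::real) \<epsilon>)" "(1/u0, 0) \<in> ball (1/u0, 0::real) \<epsilon>" using \<epsilon>(1) by auto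
    then show ?thesis using that stable unfolding asymp_stable_periodic_def by meson
  qed
  obtain \<epsilon>' where \<epsilon>': "\<epsilon>' > 0" "ball (1/u0, 0::real) \<epsilon>' \<subseteq> W" using W open_contains_ball by blast
  define \<eta> where "\<eta> = min \<epsilon>' \<eta>0 / 2"
  have \<eta>: "\<eta> > 0" "\<eta> < \<epsilon>'" using \<epsilon>' \<eta>0_pos by (auto simp: \<eta>_def)
  have "dist (1/u0, -\<eta>) (1/u0, 0) = \<eta>" using \<eta> by (simp add: dist_norm norm_Pair)
  then have "(1/u0, -\<eta>) \<in> W" using \<epsilon>' \<eta> by (auto simp: dist_commute)
  then obtain x where sol: "impulsive_solution F (si_jump p) T x" and x0: "x 0 = (1/u0, -\<eta>)"
    and stay: "\<And>k::nat. x (real k * T) \<in> ball (1/u0, 0::real) \<epsilon>"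
    using W_stays by blast
  have grow: "\<eta> + real k * (lam0 * \<eta>^2) \<le> \<bar>snd (x (real k*T))\<bar>" for k
    using I_grows_while_near_orbit[OF sol x0 \<eta>(1) near[OF stay]] by blast
  obtain k :: nat where "\<eta>0 / (lam0 * \<eta>^2) < real k" using reals_Archimedean2 by blast
  then have "\<eta>0 < real k * (lam0 * \<eta>^2)" using lam0_pos \<eta> by (simp add: pos_divide_less_eq)
  then show False using grow[of k] near[OF stay[of k]] \<eta> by linarith
qed

end

section \<open>Instability for p \<ge> p1\<close>

text \<open>
  For p \<ge> p1 the point (\<S>(0), 0) has \<S>(0) = sstar \<le> 0.  On I = 0 one period followed by the
  impulse maps u = 1/S affinely to thb u + dd with thb \<ge> 1, so starting slightly below sstar
  1/S increases by a fixed amount every period and eventually becomes positive, while S < 0.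
\<close>
locale si_overpulsed = si_system +
  assumes orbit_nonpos: "exp (A*T)*(1-p) \<le> 1"
begin

definition "sstar = A*(exp (A*T)*(1-p) - 1)/(exp (A*T) - 1)"
definition "thb = exp (-(A*T))/(1-p)"
definition "dd = (1 - exp (-(A*T)))/(A*(1-p))"

lemma sstar_eq_Sper: "sstar = Sper A p T 0"
  by (simp add: sstar_def Sper_def Let_def algebra_simps)

lemma exp_AT_gt_1: "exp (A*T) > 1" using A_pos T_pos by simp

lemma thb_ge_1: "thb \<ge> 1"
proof -
  have "1 - p \<le> exp (-(A*T))" using orbit_nonpos by (simp add: exp_minus field_simps)
  then show ?thesis using p_less_1 by (simp add: thb_def)
qed

lemma dd_pos: "dd > 0" using A_pos T_pos p_less_1 by (simp add: dd_def)

lemma sstar_nonpos: "sstar \<le> 0"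
  using orbit_nonpos exp_AT_gt_1 A_pos unfolding sstar_def
  by (intro divide_nonpos_pos mult_nonneg_nonpos) auto

lemma dd_sstar: "dd * sstar = 1 - thb"
proof -
  define E where "E = exp (A*T)"
  have E: "E > 1" using exp_AT_gt_1 by (simp add: E_def)
  have em: "exp (-(A*T)) = 1/E" by (simp add: E_def exp_minus field_simps)
  have key: "(1 - 1/E)/(A*q) * (A*(E*q - 1)/(E - 1)) = 1 - (1/E)/q" if "q \<noteq> 0" for q
  proof -
    have "E - 1 \<noteq> 0" "E \<noteq> 0" "A \<noteq> 0" using E A_pos by auto
    then show ?thesis using that by (simp add: field_simps)
  qed
  show ?thesis
    unfolding dd_def sstar_def thb_def em E_def[symmetric] using key[of "1-p"] p_less_1 by simp
qed

lemma drift_pos: assumes "s < sstar" shows "(thb - 1)/s + dd > 0"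
proof -
  have s_neg: "s < 0" using assms sstar_nonpos by simp
  have "dd * s < dd * sstar" using assms dd_pos by simp
  then have "(thb - 1) + dd * s < 0" using dd_sstar by simp
  then have "((thb - 1) + dd * s)/s > 0" using s_neg by (simp add: divide_neg_neg)
  then show ?thesis using s_neg by (simp add: field_simps)
qed

lemma recip_S_drifts:
  assumes sol: "impulsive_solution F (si_jump p) T x" and x0: "x 0 = (s0, 0)" and s0: "s0 < sstar"
  shows "snd (x (real k*T)) = 0 \<and> fst (x (real k*T)) < 0 \<and>
    1/s0 + real k * ((thb - 1)/s0 + dd) \<le> 1/fst (x (real k*T))"
proof (induction k)
  case 0 then show ?case using x0 s0 sstar_nonpos by simp
next
  case (Suc k)
  obtain L where cont: "continuous_on {real k*T..real k*T+T} (x(real k*T+T:=L))"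
    and d: "\<And>r. r \<in> {real k*T<..<real k*T+T} \<Longrightarrow>
      ((x(real k*T+T:=L)) has_vector_derivative F r ((x(real k*T+T:=L)) r)) (at r)"
    and start: "(x(real k*T+T:=L)) (real k*T) = x (real k*T)"
    and final: "(x(real k*T+T:=L)) (real k*T+T) = L"
    and j: "x (real (Suc k)*T) = si_jump p L"
    using impulsive_solution_period[OF sol] by blast
  have L: "snd L = 0" "fst L < 0" "1/fst L = exp (-(A*T)) * (1/fst (x (real k*T)) - 1/A) + 1/A"
    using I_zero_segment[OF cont d] start final Suc by auto
  define uk where "uk = 1/fst (x (real k*T))"
  define \<delta> where "\<delta> = (thb - 1)/s0 + dd"
  have uk_ge: "1/s0 + real k * \<delta> \<le> uk" using Suc.IH unfolding uk_def \<delta>_def by blast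
  moreover have "0 \<le> real k * \<delta>" using drift_pos[OF s0] by (simp add: \<delta>_def)
  ultimately have "1/s0 \<le> uk" by linarith
  have "1/fst (si_jump p L) = (1/fst L)/(1-p)" by (simp add: si_jump_def)
  also have "\<dots> = (exp (-(A*T)) * (uk - 1/A) + 1/A)/(1-p)" using L(3) by (simp add: uk_def)
  also have "\<dots> = thb * uk + dd"
  proof -
    have "(e*(uk - 1/A) + 1/A)/q = (e/q)*uk + (1 - e)/(A*q)" if "q \<noteq> 0" for e q
      using that A_pos by (simp add: field_simps)
    then show ?thesis using p_less_1 unfolding thb_def dd_def by simp
  qed
  also have "\<dots> = uk + ((thb - 1)*uk + dd)" by (simp add: algebra_simps)
  finally have "1/fst (si_jump p L) = uk + ((thb - 1)*uk + dd)" .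
  moreover have "(thb - 1)/s0 \<le> (thb - 1)*uk"
    using thb_ge_1 \<open>1/s0 \<le> uk\<close> by (simp add: divide_inverse mult_left_mono)
  ultimately have "uk + \<delta> \<le> 1/fst (si_jump p L)" by (simp add: \<delta>_def)
  then have "1/s0 + real (Suc k) * \<delta> \<le> 1/fst (si_jump p L)"
    using uk_ge by (simp add: algebra_simps)
  moreover have "snd (si_jump p L) = 0" "fst (si_jump p L) < 0"
    using L p_less_1 by (auto simp: si_jump_def mult_pos_neg)
  ultimately show ?case using j unfolding \<delta>_def by simp
qed

theorem nonpos_orbit_not_asymp_stable: "\<not> asymp_stable_periodic F (si_jump p) T (sstar, 0)"
proof
  assume "asymp_stable_periodic F (si_jump p) T (sstar, 0)"
  then obtain W where W: "open W" "(sstar, 0) \<in> W"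
    and W_sol: "\<And>y0. y0 \<in> W \<Longrightarrow> \<exists>x. impulsive_solution F (si_jump p) T x \<and> x 0 = y0"
    unfolding asymp_stable_periodic_def by (metis open_UNIV UNIV_I)
  obtain \<epsilon> where e: "\<epsilon> > 0" "ball (sstar, 0) \<epsilon> \<subseteq> W" using W open_contains_ball by blast
  define s0 where "s0 = sstar - \<epsilon>/2"
  have s0: "s0 < sstar" "s0 < 0" using e sstar_nonpos by (auto simp: s0_def)
  have "dist (s0, 0::real) (sstar, 0) = \<epsilon>/2" using e by (simp add: s0_def dist_norm norm_Pair)
  then have "(s0, 0) \<in> W" using e by (auto simp: dist_commute)
  then obtain x where sol: "impulsive_solution F (si_jump p) T x" and x0: "x 0 = (s0, 0)"
    using W_sol by blast
  define \<delta> where "\<delta> = (thb - 1)/s0 + dd"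
  have \<delta>: "\<delta> > 0" using drift_pos[OF s0(1)] by (simp add: \<delta>_def)
  obtain k :: nat where "- (1/s0) / \<delta> < real k" using reals_Archimedean2 by blast
  then have "- (1/s0) < real k * \<delta>" by (simp only: pos_divide_less_eq[OF \<delta>])
  then have "1/s0 + real k * \<delta> > 0" by simp
  moreover have "1/s0 + real k * \<delta> \<le> 1/fst (x (real k*T))" "1/fst (x (real k*T)) < 0"
    using recip_S_drifts[OF sol x0 s0(1), of k] by (auto simp: \<delta>_def)
  ultimately show False by linarith
qed

end

lemma full_pulse_not_asymp_stable:
  assumes T_pos: "T > 0" and s: "s \<noteq> 0"
  shows "\<not> asymp_stable_periodic F (si_jump 1) T (s, 0)"
proof
  assume "asymp_stable_periodic F (si_jump 1) T (s, 0)"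
  moreover have "open (ball (s, 0::real) \<bar>s\<bar>)" "(s, 0) \<in> ball (s, 0::real) \<bar>s\<bar>" using s by auto
  ultimately obtain W where W: "(s, 0) \<in> W"
    and W_stays: "\<And>y0. y0 \<in> W \<Longrightarrow> (\<exists>x. impulsive_solution F (si_jump 1) T x \<and> x 0 = y0) \<and>
      (\<forall>x. impulsive_solution F (si_jump 1) T x \<and> x 0 = y0 \<longrightarrow> (\<forall>k::nat. x (real k * T) \<in> ball (s, 0) \<bar>s\<bar>))"
    unfolding asymp_stable_periodic_def by meson
  obtain x where sol: "impulsive_solution F (si_jump 1) T x" and x0: "x 0 = (s, 0)"
    using W_stays[OF W] by blast
  have in_ball: "x (real 1 * T) \<in> ball (s, 0) \<bar>s\<bar>" using W_stays[OF W] sol x0 by blast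
  obtain L where "x (real (Suc 0) * T) = si_jump 1 L"
    using sol unfolding impulsive_solution_def by blast
  then have "x (real 1 * T) = (0, snd L)" by (simp add: si_jump_def)
  then have "dist (s, 0::real) (0, snd L) < \<bar>s\<bar>" using in_ball by simp
  moreover have "\<bar>s\<bar> \<le> dist (s, 0::real) (0, snd L)"
    using abs_fst_le_norm[of "(s, 0) - (0, snd L)"] by (simp add: dist_norm)
  ultimately show False by simp
qed

lemma Sper_0: "Sper A p T 0 = A*(exp (A*T)*(1-p) - 1)/(exp (A*T) - 1)"
  by (simp add: Sper_def Let_def algebra_simps)

lemma less_p1_iff: "p < p1 A T \<longleftrightarrow> exp (A*T)*(1-p) > 1"
proof -
  have "p < p1 A T \<longleftrightarrow> exp (-(A*T)) < 1 - p" by (auto simp: p1_def)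
  also have "\<dots> \<longleftrightarrow> 1 < exp (A*T)*(1-p)" by (simp add: exp_minus field_simps)
  finally show ?thesis .
qed

context si_system
begin

lemma overpulsed_not_asymp_stable:
  assumes "exp (A*T)*(1-p) \<le> 1"
  shows "\<not> asymp_stable_periodic (si_field b A \<sigma> g) (si_jump p) T (Sper A p T 0, 0)"
proof -
  interpret si_overpulsed A \<beta>0 \<sigma> g p T bM b by unfold_locales (rule assms)
  show ?thesis using nonpos_orbit_not_asymp_stable sstar_eq_Sper by (simp add: F_def)
qed

lemma superthreshold_not_asymp_stable:
  assumes "exp (A*T)*(1-p) > 1" "\<beta>0*(A*T + ln (1-p)) - (\<sigma>+g)*T \<ge> 0"
  shows "\<not> asymp_stable_periodic (si_field b A \<sigma> g) (si_jump p) T (Sper A p T 0, 0)"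
proof -
  interpret si_superthreshold A \<beta>0 \<sigma> g p T bM b by unfold_locales (use assms in \<open>simp_all add: c_def\<close>)
  show ?thesis using orbit_not_asymp_stable inverse_u0_eq_Sper by (simp add: F_def)
qed

end

lemma subthreshold_asymp_stable:
  fixes A \<beta>0 \<sigma> g p T :: real
  assumes orbit_pos: "exp (A*T)*(1-p) > 1" and A_pos: "A > 0" and p: "p < 1" and T_pos: "T > 0"
    and threshold: "\<beta>0*(A*T + ln (1-p)) - (\<sigma>+g)*T < 0"
  obtains \<delta> where "\<delta> > 0"
    "\<And>bM b. si_system A \<beta>0 \<sigma> g p T bM b \<Longrightarrow> (\<And>t. b t \<le> \<beta>0 + \<delta>) \<Longrightarrow>
       asymp_stable_periodic (si_field b A \<sigma> g) (si_jump p) T (Sper A p T 0, 0)"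
proof
  define \<mu> where "\<mu> = - (\<beta>0*(A*T + ln (1-p)) - (\<sigma>+g)*T) / 2"
  define E where "E = exp (A*T)"
  define umin where "umin = (1-p)*((E - 1)/(A*(E*(1-p) - 1)))/2"
  have \<mu>_pos: "\<mu> > 0" using threshold by (simp add: \<mu>_def)
  have E: "E > 1" using A_pos T_pos by (simp add: E_def)
  have umin_pos: "umin > 0" using p E orbit_pos A_pos by (simp add: umin_def E_def)
  show "\<mu>*umin/(2*T) > 0" using \<mu>_pos umin_pos T_pos by simp
  fix bM b assume sys: "si_system A \<beta>0 \<sigma> g p T bM b" and small: "\<And>t. b t \<le> \<beta>0 + \<mu>*umin/(2*T)"
  have pos: "si_positive_orbit A \<beta>0 \<sigma> g p T bM b"
    by (rule si_positive_orbit.intro[OF sys], unfold_locales) (rule orbit_pos)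
  have umin_eq: "si_positive_orbit.umin A p T = umin"
    unfolding si_positive_orbit.umin_def[OF pos] si_positive_orbit.u0_eq[OF pos]
      si_positive_orbit.Ke_def[OF pos] umin_def E_def ..
  interpret si_subthreshold A \<beta>0 \<sigma> g p T bM b \<mu> "\<mu>*umin/(2*T)"
  proof (rule si_subthreshold.intro[OF pos], unfold_locales)
    show "\<beta>0 * (A * T + ln (1 - p)) - si_system.c \<sigma> g * T = - 2 * \<mu>"
      by (simp add: \<mu>_def si_system.c_def[OF sys])
    show "\<mu>*umin/(2*T) * T / si_positive_orbit.umin A p T \<le> \<mu>/2"
      using umin_eq umin_pos T_pos by simp
  qed (use \<mu>_pos small in \<open>auto simp: algebra_simps\<close>)
  show "asymp_stable_periodic (si_field b A \<sigma> g) (si_jump p) T (Sper A p T 0, 0)"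
    using orbit_asymp_stable inverse_u0_eq_Sper by (simp add: F_def)
qed

section \<open>The seasonal transmission rate\<close>

lemma periodic_shift_nat:
  assumes per: "\<And>x. \<Psi> (x + \<tau>) = \<Psi> x"
  shows "\<Psi> (y + real n * \<tau>) = \<Psi> y"
proof (induction n)
  case (Suc n)
  have "y + real (Suc n) * \<tau> = (y + real n * \<tau>) + \<tau>" by (simp add: algebra_simps)
  then show ?case using per[of "y + real n * \<tau>"] Suc by (simp add: add.assoc)
qed simp

lemma periodic_continuous_bounded_above:
  fixes \<Psi> :: "real \<Rightarrow> real"
  assumes cont: "continuous_on UNIV \<Psi>" and \<tau>: "\<tau> > 0" and per: "\<And>x. \<Psi> (x + \<tau>) = \<Psi> x"
  obtains P where "P > 0" "\<And>x. \<Psi> x \<le> P"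
proof -
  obtain B where B: "\<And>x. x \<in> {0..\<tau>} \<Longrightarrow> norm (\<Psi> x) \<le> B"
    using continuous_on_compact_bound[of "{0..\<tau>}" \<Psi>] cont by (auto intro: continuous_on_subset)
  have "\<Psi> x \<le> \<bar>B\<bar> + 1" for x
  proof -
    define n where "n = \<lfloor>x/\<tau>\<rfloor>"
    define y where "y = x - of_int n * \<tau>"
    have "of_int n \<le> x/\<tau>" "x/\<tau> < of_int n + 1" unfolding n_def by linarith+
    then have "of_int n * \<tau> \<le> x" "x < (of_int n + 1) * \<tau>" using \<tau> by (auto simp: field_simps)
    then have y: "y \<in> {0..\<tau>}" by (auto simp: y_def algebra_simps)
    have "\<Psi> x = \<Psi> y"
    proof (cases "n \<ge> 0")
      case True
      then have "x = y + real (nat n) * \<tau>" by (simp add: y_def)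
      then show ?thesis using periodic_shift_nat[of \<Psi> \<tau> y "nat n", OF per] by simp
    next
      case False
      then have "y = x + real (nat (-n)) * \<tau>" by (simp add: y_def)
      then show ?thesis using periodic_shift_nat[of \<Psi> \<tau> x "nat (-n)", OF per] by simp
    qed
    then show ?thesis using B[OF y] by simp
  qed
  then show ?thesis using that[of "\<bar>B\<bar> + 1"] by simp
qed

lemma beta_seas_bounds:
  assumes "0 < \<beta>0" "0 \<le> \<gamma>" "\<And>x. 0 \<le> \<Psi> x" "\<And>x. \<Psi> x \<le> Pm"
  shows "\<beta>0 \<le> beta_seas \<beta>0 \<gamma> \<omega> \<Psi> t" "beta_seas \<beta>0 \<gamma> \<omega> \<Psi> t \<le> \<beta>0 + \<beta>0*\<gamma>*Pm"
proof -
  have "0 \<le> \<gamma> * \<Psi> (\<omega>*t)" "\<gamma> * \<Psi> (\<omega>*t) \<le> \<gamma> * Pm"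
    using assms by (auto intro: mult_left_mono)
  then show "\<beta>0 \<le> beta_seas \<beta>0 \<gamma> \<omega> \<Psi> t" "beta_seas \<beta>0 \<gamma> \<omega> \<Psi> t \<le> \<beta>0 + \<beta>0*\<gamma>*Pm"
    using assms(1) by (auto simp: beta_seas_def algebra_simps mult_left_mono)
qed

lemma si_system_beta_seas:
  assumes "0 < A" "0 < \<beta>0" "0 < \<sigma> + g" "0 \<le> p" "p < 1" "0 < T"
    and cont: "continuous_on UNIV \<Psi>" and \<Psi>: "\<And>x. 0 \<le> \<Psi> x" "\<And>x. \<Psi> x \<le> Pm"
    and \<gamma>: "0 < \<gamma>" "\<gamma> * Pm \<le> 1"
  shows "si_system A \<beta>0 \<sigma> g p T (2*\<beta>0) (beta_seas \<beta>0 \<gamma> \<omega> \<Psi>)"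
proof
  show "continuous_on UNIV (beta_seas \<beta>0 \<gamma> \<omega> \<Psi>)"
    unfolding beta_seas_def[abs_def] by (intro continuous_intros continuous_on_compose2[OF cont]) auto
  fix t
  show "\<beta>0 \<le> beta_seas \<beta>0 \<gamma> \<omega> \<Psi> t" using beta_seas_bounds(1)[of \<beta>0 \<gamma> \<Psi> Pm \<omega> t] assms by auto
  have "\<beta>0*\<gamma>*Pm \<le> \<beta>0" using \<gamma> assms(2) by (simp add: mult.assoc mult_left_le)
  moreover have "beta_seas \<beta>0 \<gamma> \<omega> \<Psi> t \<le> \<beta>0 + \<beta>0*\<gamma>*Pm"
    using beta_seas_bounds(2)[of \<beta>0 \<gamma> \<Psi> Pm \<omega> t] assms by auto
  ultimately show "beta_seas \<beta>0 \<gamma> \<omega> \<Psi> t \<le> 2*\<beta>0" by linarith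
qed (use assms in auto)

lemma integral_nonneg_unconditional:
  fixes f :: "real \<Rightarrow> real"
  assumes "\<And>x. x \<in> S \<Longrightarrow> 0 \<le> f x"
  shows "0 \<le> integral S f"
  using assms by (cases "f integrable_on S") (auto intro: integral_nonneg simp: not_integrable_integral)

lemma integral_le_const_unconditional:
  fixes f :: "real \<Rightarrow> real"
  assumes "\<And>x. x \<in> {a..b} \<Longrightarrow> f x \<le> M" "M \<ge> 0" "a \<le> b"
  shows "integral {a..b} f \<le> M * (b - a)"
proof (cases "f integrable_on {a..b}")
  case True
  have "integral {a..b} f \<le> integral {a..b} (\<lambda>_. M)"
    using True assms by (intro integral_le) auto
  then show ?thesis using assms by (simp add: mult.commute)
qed (use assms in \<open>simp add: not_integrable_integral\<close>)

lemma Sper_bounds: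
  assumes "exp (A*T)*(1-p) > 1" "0 \<le> p" "A > 0"
  shows "0 < Sper A p T t" "Sper A p T t \<le> A"
proof -
  define s where "s = t - T * of_int \<lfloor>t/T\<rfloor>"
  define K where "K = exp (A*T)*(1-p) - 1"
  have K: "K > 0" using assms by (simp add: K_def)
  have e: "Sper A p T t = A*K/(K + p*exp (A*(T-s)))" by (simp add: Sper_def s_def K_def Let_def)
  have d: "K + p*exp (A*(T-s)) \<ge> K" using assms by simp
  then have dp: "K + p*exp (A*(T-s)) > 0" using K by linarith
  show "0 < Sper A p T t" unfolding e using K dp assms by simp
  have "A*K/(K + p*exp (A*(T-s))) \<le> A*K/K" using K d assms dp by (intro divide_left_mono) auto
  then show "Sper A p T t \<le> A" unfolding e using K by simp
qed

lemma orbit_weighted_integral_bounds: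
  assumes "exp (A*T)*(1-p) > 1" "0 \<le> p" "A > 0" "T > 0" "\<And>x. 0 \<le> \<Psi> x" "\<And>x. \<Psi> x \<le> Pm"
  shows "0 \<le> integral {0..T} (\<lambda>t. \<Psi> (\<omega>*t) * Sper A p T t)"
    "integral {0..T} (\<lambda>t. \<Psi> (\<omega>*t) * Sper A p T t) \<le> Pm*A*T"
proof -
  have S: "0 < Sper A p T t" "Sper A p T t \<le> A" for t using Sper_bounds assms by auto
  have Pm: "0 \<le> Pm" using assms(5,6)[of 0] by linarith
  show "0 \<le> integral {0..T} (\<lambda>t. \<Psi> (\<omega>*t) * Sper A p T t)"
    using S assms by (intro integral_nonneg_unconditional mult_nonneg_nonneg) (auto intro: less_imp_le)
  have "integral {0..T} (\<lambda>t. \<Psi> (\<omega>*t) * Sper A p T t) \<le> (Pm*A) * (T - 0)"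
    using S assms Pm by (intro integral_le_const_unconditional mult_mono) (auto intro: less_imp_le)
  then show "integral {0..T} (\<lambda>t. \<Psi> (\<omega>*t) * Sper A p T t) \<le> Pm*A*T" by simp
qed

lemma p2_seas_less_iff:
  assumes "p < 1" "0 < \<beta>0"
  shows "p2_seas A ((\<sigma>+g)/\<beta>0) p \<gamma> \<omega> T \<Psi> T < p \<longleftrightarrow>
    \<beta>0*(A*T + ln (1-p)) - (\<sigma>+g)*T + \<beta>0*\<gamma>*integral {0..T} (\<lambda>t. \<Psi> (\<omega>*t) * Sper A p T t) < 0"
proof -
  define X where "X = (A - (\<sigma>+g)/\<beta>0)*T + \<gamma>*integral {0..T} (\<lambda>t. \<Psi> (\<omega>*t) * Sper A p T t)"
  have "p2_seas A ((\<sigma>+g)/\<beta>0) p \<gamma> \<omega> T \<Psi> T < p \<longleftrightarrow> 1 - p < exp (-X)"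
    by (auto simp: p2_seas_def X_def)
  also have "\<dots> \<longleftrightarrow> ln (1-p) < -X" using assms(1) by (metis exp_less_cancel_iff exp_ln diff_gt_0_iff_gt)
  also have "\<dots> \<longleftrightarrow> \<beta>0 * (ln (1-p) + X) < 0" using assms(2) by (auto simp: mult_less_0_iff)
  also have "\<beta>0 * (ln (1-p) + X)
      = \<beta>0*(A*T + ln (1-p)) - (\<sigma>+g)*T + \<beta>0*\<gamma>*integral {0..T} (\<lambda>t. \<Psi> (\<omega>*t) * Sper A p T t)"
    using assms(2) by (simp add: X_def field_simps)
  finally show ?thesis .
qed

lemma seasonal_not_asymp_stable_beyond_p1:
  assumes "0 < A" "0 < \<beta>0" "0 < \<sigma> + g" "0 \<le> p" "p \<le> 1" "0 < T"
    and cont: "continuous_on UNIV \<Psi>" and \<Psi>: "\<And>x. 0 \<le> \<Psi> x" "\<And>x. \<Psi> x \<le> Pm"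
    and \<gamma>: "0 < \<gamma>" "\<gamma> * Pm \<le> 1" and beyond: "\<not> p < p1 A T"
  shows "\<not> asymp_stable_periodic (si_field (beta_seas \<beta>0 \<gamma> \<omega> \<Psi>) A \<sigma> g) (si_jump p) T (Sper A p T 0, 0)"
proof (cases "p = 1")
  case True
  have "exp (A*T) > 1" using assms by simp
  then have "Sper A p T 0 \<noteq> 0" using True assms by (simp add: Sper_0)
  then show ?thesis using full_pulse_not_asymp_stable[OF \<open>0 < T\<close>] True by simp
next
  case False
  interpret si_system A \<beta>0 \<sigma> g p T "2*\<beta>0" "beta_seas \<beta>0 \<gamma> \<omega> \<Psi>"
    by (rule si_system_beta_seas) (use assms False in auto)
  show ?thesis using overpulsed_not_asymp_stable beyond less_p1_iff by simp
qed

context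
  fixes A \<beta>0 \<sigma> g p T Pm :: real and \<Psi> :: "real \<Rightarrow> real"
  assumes A: "0 < A" and \<beta>0: "0 < \<beta>0" and removal: "0 < \<sigma> + g"
    and p: "0 \<le> p" "p < 1" and T: "0 < T" and orbit_pos: "exp (A*T)*(1-p) > 1"
    and cont: "continuous_on UNIV \<Psi>" and \<Psi>: "\<And>x. 0 \<le> \<Psi> x" "\<And>x. \<Psi> x \<le> Pm" and Pm: "0 < Pm"
begin

lemma si_system_beta_seas_small:
  "0 < \<gamma> \<Longrightarrow> \<gamma> < 1/Pm \<Longrightarrow> si_system A \<beta>0 \<sigma> g p T (2*\<beta>0) (beta_seas \<beta>0 \<gamma> \<omega> \<Psi>)"
  by (rule si_system_beta_seas) (use A \<beta>0 removal p T cont \<Psi> Pm in \<open>auto simp: field_simps\<close>)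

lemma seasonal_superthreshold:
  assumes threshold: "\<beta>0*(A*T + ln (1-p)) - (\<sigma>+g)*T \<ge> 0" and \<gamma>: "0 < \<gamma>" "\<gamma> < 1/Pm"
  shows "\<not> asymp_stable_periodic (si_field (beta_seas \<beta>0 \<gamma> \<omega> \<Psi>) A \<sigma> g) (si_jump p) T (Sper A p T 0, 0)"
    "\<not> p2_seas A ((\<sigma>+g)/\<beta>0) p \<gamma> \<omega> T \<Psi> T < p"
proof -
  show "\<not> asymp_stable_periodic (si_field (beta_seas \<beta>0 \<gamma> \<omega> \<Psi>) A \<sigma> g) (si_jump p) T (Sper A p T 0, 0)"
    using si_system.superthreshold_not_asymp_stable[OF si_system_beta_seas_small[OF \<gamma>] orbit_pos threshold] .
  have "0 \<le> \<beta>0*\<gamma>*integral {0..T} (\<lambda>t. \<Psi> (\<omega>*t) * Sper A p T t)"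
    using orbit_weighted_integral_bounds(1)[where \<Psi>=\<Psi> and \<omega>=\<omega>, OF orbit_pos p(1) A T \<Psi>] \<beta>0 \<gamma>
    by simp
  then show "\<not> p2_seas A ((\<sigma>+g)/\<beta>0) p \<gamma> \<omega> T \<Psi> T < p"
    using p2_seas_less_iff[where A=A and \<sigma>=\<sigma> and g=g and \<gamma>=\<gamma> and \<omega>=\<omega> and T=T and \<Psi>=\<Psi>, OF p(2) \<beta>0] threshold by linarith
qed

lemma seasonal_subthreshold:
  assumes threshold: "\<beta>0*(A*T + ln (1-p)) - (\<sigma>+g)*T < 0"
  obtains \<gamma>0 where "\<gamma>0 > 0" "\<And>\<gamma> \<omega>. 0 < \<gamma> \<Longrightarrow> \<gamma> < \<gamma>0 \<Longrightarrow>
    asymp_stable_periodic (si_field (beta_seas \<beta>0 \<gamma> \<omega> \<Psi>) A \<sigma> g) (si_jump p) T (Sper A p T 0, 0) \<and>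
    p2_seas A ((\<sigma>+g)/\<beta>0) p \<gamma> \<omega> T \<Psi> T < p"
proof -
  define Q where "Q = \<beta>0*(A*T + ln (1-p)) - (\<sigma>+g)*T"
  obtain \<delta> where \<delta>: "\<delta> > 0"
    "\<And>bM b. si_system A \<beta>0 \<sigma> g p T bM b \<Longrightarrow> (\<And>t. b t \<le> \<beta>0 + \<delta>) \<Longrightarrow>
       asymp_stable_periodic (si_field b A \<sigma> g) (si_jump p) T (Sper A p T 0, 0)"
    using subthreshold_asymp_stable[OF orbit_pos A p(2) T threshold] by blast
  define \<gamma>0 where "\<gamma>0 = min (1/Pm) (min (\<delta>/(\<beta>0*Pm)) (-Q/(\<beta>0*Pm*A*T)))"
  have "\<gamma>0 > 0" using \<delta>(1) \<beta>0 Pm A T threshold by (simp add: \<gamma>0_def Q_def divide_neg_pos)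
  moreover have "asymp_stable_periodic (si_field (beta_seas \<beta>0 \<gamma> \<omega> \<Psi>) A \<sigma> g) (si_jump p) T (Sper A p T 0, 0) \<and>
    p2_seas A ((\<sigma>+g)/\<beta>0) p \<gamma> \<omega> T \<Psi> T < p" if \<gamma>: "0 < \<gamma>" "\<gamma> < \<gamma>0" for \<gamma> \<omega>
  proof
    have \<gamma>_small: "\<gamma> < 1/Pm" "\<beta>0*\<gamma>*Pm \<le> \<delta>" "\<beta>0*\<gamma>*(Pm*A*T) < -Q"
      using \<gamma> \<beta>0 Pm A T by (auto simp: \<gamma>0_def field_simps)
    have "beta_seas \<beta>0 \<gamma> \<omega> \<Psi> t \<le> \<beta>0 + \<delta>" for t
      using beta_seas_bounds(2)[where \<Psi>=\<Psi> and Pm=Pm and \<gamma>=\<gamma> and \<omega>=\<omega> and t=t, OF \<beta>0 _ \<Psi>]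
        \<gamma> \<gamma>_small(2) by simp
    then show "asymp_stable_periodic (si_field (beta_seas \<beta>0 \<gamma> \<omega> \<Psi>) A \<sigma> g) (si_jump p) T (Sper A p T 0, 0)"
      using \<delta>(2)[OF si_system_beta_seas_small[OF \<gamma>(1) \<gamma>_small(1)]] by blast
    have "\<beta>0*\<gamma>*integral {0..T} (\<lambda>t. \<Psi> (\<omega>*t) * Sper A p T t) \<le> \<beta>0*\<gamma>*(Pm*A*T)"
      using orbit_weighted_integral_bounds(2)[where \<Psi>=\<Psi> and Pm=Pm and \<omega>=\<omega>, OF orbit_pos p(1) A T \<Psi>] \<gamma> \<beta>0
      by (intro mult_left_mono) auto
    then show "p2_seas A ((\<sigma>+g)/\<beta>0) p \<gamma> \<omega> T \<Psi> T < p"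
      using p2_seas_less_iff[where A=A and \<sigma>=\<sigma> and g=g and \<gamma>=\<gamma> and \<omega>=\<omega> and T=T and \<Psi>=\<Psi>, OF p(2) \<beta>0] \<gamma>_small(3) by (simp add: Q_def)
  qed
  ultimately show ?thesis by (rule that)
qed

lemma seasonal_stable_iff_p2_seas_less:
  "\<exists>\<gamma>0>0. \<forall>\<gamma> \<omega>. 0 < \<gamma> \<and> \<gamma> < \<gamma>0 \<longrightarrow>
    (asymp_stable_periodic (si_field (beta_seas \<beta>0 \<gamma> \<omega> \<Psi>) A \<sigma> g) (si_jump p) T (Sper A p T 0, 0)
      \<longleftrightarrow> p2_seas A ((\<sigma>+g)/\<beta>0) p \<gamma> \<omega> T \<Psi> T < p)"
proof (cases "\<beta>0*(A*T + ln (1-p)) - (\<sigma>+g)*T \<ge> 0")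
  case True
  show ?thesis
  proof (intro exI[of _ "1/Pm"] conjI allI impI)
    show "1/Pm > 0" using Pm by simp
    fix \<gamma> \<omega> :: real assume "0 < \<gamma> \<and> \<gamma> < 1/Pm"
    then show "asymp_stable_periodic (si_field (beta_seas \<beta>0 \<gamma> \<omega> \<Psi>) A \<sigma> g) (si_jump p) T (Sper A p T 0, 0)
      \<longleftrightarrow> p2_seas A ((\<sigma>+g)/\<beta>0) p \<gamma> \<omega> T \<Psi> T < p"
      using seasonal_superthreshold[OF True] by blast
  qed
next
  case False
  then have "\<beta>0*(A*T + ln (1-p)) - (\<sigma>+g)*T < 0" by simp
  then obtain \<gamma>0 where \<gamma>0: "\<gamma>0 > 0" "\<And>\<gamma> \<omega>. 0 < \<gamma> \<Longrightarrow> \<gamma> < \<gamma>0 \<Longrightarrow>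
    asymp_stable_periodic (si_field (beta_seas \<beta>0 \<gamma> \<omega> \<Psi>) A \<sigma> g) (si_jump p) T (Sper A p T 0, 0) \<and>
    p2_seas A ((\<sigma>+g)/\<beta>0) p \<gamma> \<omega> T \<Psi> T < p"
    using seasonal_subthreshold by blast
  show ?thesis
  proof (intro exI[of _ \<gamma>0] conjI allI impI)
    fix \<gamma> \<omega> :: real assume "0 < \<gamma> \<and> \<gamma> < \<gamma>0"
    then show "asymp_stable_periodic (si_field (beta_seas \<beta>0 \<gamma> \<omega> \<Psi>) A \<sigma> g) (si_jump p) T (Sper A p T 0, 0)
      \<longleftrightarrow> p2_seas A ((\<sigma>+g)/\<beta>0) p \<gamma> \<omega> T \<Psi> T < p"
      using \<gamma>0(2) by blast
  qed (rule \<gamma>0(1))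
qed

end

theorem seasonal_threshold:
  assumes A: "0 < A" and \<beta>0: "0 < \<beta>0" and removal: "0 < \<sigma> + g"
    and p: "0 \<le> p" "p \<le> 1" and T: "0 < T"
    and cont: "continuous_on UNIV \<Psi>" and \<Psi>: "\<And>x. 0 \<le> \<Psi> x" "\<And>x. \<Psi> x \<le> Pm" and Pm: "0 < Pm"
  shows "\<exists>\<gamma>0>0. \<forall>\<gamma> \<omega>. 0 < \<gamma> \<and> \<gamma> < \<gamma>0 \<longrightarrow>
    (asymp_stable_periodic (si_field (beta_seas \<beta>0 \<gamma> \<omega> \<Psi>) A \<sigma> g) (si_jump p) T (Sper A p T 0, 0)
      \<longleftrightarrow> p2_seas A ((\<sigma>+g)/\<beta>0) p \<gamma> \<omega> T \<Psi> T < p \<and> p < p1 A T)"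
proof (cases "p < p1 A T")
  case False
  have "\<gamma> * Pm \<le> 1" if "\<gamma> < 1/Pm" for \<gamma> using that Pm by (simp add: field_simps)
  then show ?thesis
    using seasonal_not_asymp_stable_beyond_p1[OF A \<beta>0 removal p T cont \<Psi>] False Pm
    by (intro exI[of _ "1/Pm"]) auto
next
  case True
  moreover have "p < 1" using True exp_gt_zero[of "-(A*T)"] unfolding p1_def by linarith
  ultimately show ?thesis
    using seasonal_stable_iff_p2_seas_less[OF A \<beta>0 removal p(1) _ T _ cont \<Psi> Pm] less_p1_iff by simp
qed

theorem corollary1:
  fixes A \<beta>0 \<sigma> g p T \<tau> :: real and \<Psi> \<Psi>' \<Psi>'' :: "real \<Rightarrow> real"
  assumes "0 < A" "A \<le> 1" "0 < \<beta>0" "0 \<le> \<sigma>" "0 \<le> g" "0 < \<sigma> + g"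
    and "0 \<le> p" "p \<le> 1" "0 < T"
    and "A > (\<sigma> + g) / \<beta>0"
    and "0 < \<tau>" "\<And>x. \<Psi> (x + \<tau>) = \<Psi> x" "\<And>x. 0 \<le> \<Psi> x"
    and "\<And>x. (\<Psi> has_real_derivative \<Psi>' x) (at x)"
    and "\<And>x. (\<Psi>' has_real_derivative \<Psi>'' x) (at x)"
    and "\<exists>c1 c2. c1 \<in> {0..<\<tau>} \<and> c2 \<in> {0..<\<tau>} \<and> c1 \<noteq> c2 \<and>
                 \<Psi>' c1 = 0 \<and> \<Psi>'' c1 \<noteq> 0 \<and> \<Psi>' c2 = 0 \<and> \<Psi>'' c2 \<noteq> 0"
  shows "\<exists>\<gamma>0 > 0. \<exists>\<omega>0 > 0. \<forall>\<gamma> \<omega>. 0 < \<gamma> \<and> \<gamma> < \<gamma>0 \<and> 0 < \<omega> \<and> \<omega> < \<omega>0 \<longrightarrow>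
           (asymp_stable_periodic
              (si_field (beta_seas \<beta>0 \<gamma> \<omega> \<Psi>) A \<sigma> g) (si_jump p) T (Sper A p T 0, 0)
            \<longleftrightarrow> p2_seas A ((\<sigma> + g) / \<beta>0) p \<gamma> \<omega> T \<Psi> T < p \<and> p < p1 A T)"
proof -
  \<comment> \<open>The threshold holds for every frequency \<omega>.\<close>
  have cont: "continuous_on UNIV \<Psi>"
    by (intro continuous_at_imp_continuous_on ballI DERIV_isCont[OF assms(14)])
  obtain Pm where Pm: "Pm > 0" "\<And>x. \<Psi> x \<le> Pm"
    using periodic_continuous_bounded_above[OF cont assms(11,12)] by blast
  show ?thesis
    using seasonal_threshold[OF assms(1,3,6-9) cont assms(13) Pm(2) Pm(1)] zero_less_one by blast
qed

end
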